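(* Let $1\le k<d$ and $\rho\in(0,1-\frac kd)$. There exist positive constants $r_0$ and $\sigma_0$ such that the following holds. Run LISR-$k$ with parameters $\rho,r_0$ from an initial point $x^0$ and initial matrices $B_1^0,\dots,B_n^0$ satisfying $\|x^0-x^*\|\le r_0$, $B_i^0\succeq\omega^0\nabla^2 f_i(x^0)$ and $\nu\big((\omega^0)^{-1}B_i^0,\nabla^2 f_i(x^0)\big)\le\sigma_0$ for all $i\in\{1,\dots,n\}$. Then all iterates are well defined, $(\omega^{t+1})^{-1}B_{i_t}^{t+1}\succeq\nabla^2 f_{i_t}(z_{i_t}^{t+1})$ for all $t\ge0$, and for all $t\ge0$ $$\|x^{t+1}-x^*\|\le\rho^{\lceil\frac{t+1}{n}\rceil}\|x^0-x^*\|,$$ $$\nu\big((\omega^{t+1})^{-1}B_{i_t}^{t+1},\nabla^2 f_{i_t}(z_{i_t}^{t+1})\big)\le\Big(1-\frac kd\Big)^{\lceil\frac{t+1}{n}\rceil}\delta,$$ where $$\delta:=\Big(\sigma_0+\frac{4MdL^{3/2}\mu^{-1}r_0}{1-(1-k/d)^{-1}\rho}\Big)\exp\Big(\frac{4M\sqrt L\,r_0}{1-\rho}\Big).$$ (The case $k=1$ is the statement for LISR-1.)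
   Context: Problem: minimize $f(x)=\frac1n\sum_{i=1}^n f_i(x)$ over $x\in\mathbb{R}^d$, where each $f_i$ is twice differentiable with $\mu I\preceq\nabla^2 f_i(x)\preceq LI$ for all $x$ ($0<\mu\le L$) and $\|\nabla^2 f_i(x)-\nabla^2 f_i(y)\|\le\tilde L\|x-y\|$ for all $x,y$; $x^*$ is the unique minimizer of $f$. Set $\kappa=L/\mu$ and $M=\tilde L\mu^{-3/2}$. For symmetric positive definite $G\succeq A$, $\nu(G,A)=\frac{d\kappa\,\mathrm{tr}(G-A)}{\mathrm{tr}(A)}$. For a symmetric $C\in\mathbb{R}^{d\times d}$ and $1\le k<d$, $E_k(C)=[e_{i_1},\dots,e_{i_k}]\in\mathbb{R}^{d\times k}$ where $i_1,\dots,i_k$ are the indices of the $k$ largest diagonal entries of $C$. For symmetric positive definite $G\succeq A$ and full-rank $U\in\mathbb{R}^{d\times k}$: $\mathrm{SR}\text{-}k(G,A,U)=G$ if $GU=AU$, otherwise $G-(G-A)U(U^\top(G-A)U)^{\dagger}U^\top(G-A)$. Algorithm LISR-$k$ (parameters $\rho\in(0,1)$, $r_0>0$): let $\omega^t=(1+M\sqrt L\,r_0\rho^{\lceil t/n\rceil})^2$ if $t\equiv0\pmod n$ (so $\omega^0=(1+M\sqrt Lr_0)^2$) and $\omega^t=1$ otherwise. Given $x^0$ and symmetric positive definite $B_1^0,\dots,B_n^0$, set $z_i^0=x^0$ for all $i$. For $t=0,1,2,\dots$, let $i_t=(t\bmod n)+1$ and set: $x^{t+1}=(\sum_i B_i^t)^{-1}(\sum_i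 B_i^tz_i^t-\sum_i\nabla f_i(z_i^t))$; $z_{i_t}^{t+1}=x^{t+1}$ and $z_i^{t+1}=z_i^t$ for $i\ne i_t$; $B_{i_t}^{t+1}=\omega^{t+1}\,\mathrm{SR}\text{-}k\big(B_{i_t}^t,\nabla^2 f_{i_t}(z_{i_t}^{t+1}),E_k(B_{i_t}^t-\nabla^2 f_{i_t}(z_{i_t}^{t+1}))\big)$ and $B_i^{t+1}=\omega^{t+1}B_i^t$ for $i\ne i_t$. LISR-1 is the case $k=1$ (greedy symmetric rank-1 update). *)

theory Defs
  imports "HOL-Analysis.Analysis"
begin

definition psd :: "real^'n^'n \<Rightarrow> bool" where
  "psd A \<longleftrightarrow> (\<forall>v. 0 \<le> v \<bullet> (A *v v))"

definition loewner_le :: "real^'n^'n \<Rightarrow> real^'n^'n \<Rightarrow> bool" where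
  "loewner_le A B \<longleftrightarrow> psd (B - A)"

definition symmetric_matrix :: "real^'n^'n \<Rightarrow> bool" where
  "symmetric_matrix A \<longleftrightarrow> transpose A = A"

definition pos_def :: "real^'n^'n \<Rightarrow> bool" where
  "pos_def A \<longleftrightarrow> symmetric_matrix A \<and> (\<forall>v. v \<noteq> 0 \<longrightarrow> 0 < v \<bullet> (A *v v))"

definition mat_norm :: "real^'n^'m \<Rightarrow> real" where
  "mat_norm A = onorm (\<lambda>v. A *v v)"

definition pinv :: "real^'n^'m \<Rightarrow> real^'m^'n" where
  "pinv A = (THE X. A ** X ** A = A \<and> X ** A ** X = X \<and>
              transpose (A ** X) = A ** X \<and> transpose (X ** A) = X ** A)"

definition nu :: "real \<Rightarrow> real^'n^'n \<Rightarrow> real^'n^'n \<Rightarrow> real" where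
  "nu \<kappa> G A = real CARD('n) * \<kappa> * trace (G - A) / trace A"

(* U is (a version of) E_k(C): the columns of U are the standard basis vectors
   e_i for i ranging over the indices of the k = CARD('k) largest diagonal
   entries of C (ties broken arbitrarily, column order arbitrary). *)
definition is_Ek :: "real^'d^'d \<Rightarrow> real^'k^'d \<Rightarrow> bool" where
  "is_Ek C U \<longleftrightarrow> (\<exists>\<sigma>::'k \<Rightarrow> 'd. inj \<sigma> \<and>
      (\<forall>i. i \<notin> range \<sigma> \<longrightarrow> (\<forall>j. C$i$i \<le> C$(\<sigma> j)$(\<sigma> j))) \<and>
      U = (\<chi> r c. if r = \<sigma> c then 1 else 0))"

definition SRk :: "real^'d^'d \<Rightarrow> real^'d^'d \<Rightarrow> real^'k^'d \<Rightarrow> real^'d^'d" where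
  "SRk G A U = (if G ** U = A ** U then G
     else G - (G - A) ** U ** pinv (transpose U ** (G - A) ** U) ** transpose U ** (G - A))"

definition lisr_omega :: "real \<Rightarrow> real \<Rightarrow> real \<Rightarrow> real \<Rightarrow> nat \<Rightarrow> nat \<Rightarrow> real" where
  "lisr_omega M L r0 \<rho> n t =
     (if t mod n = 0 then (1 + M * sqrt L * r0 * \<rho> ^ nat \<lceil>real t / real n\<rceil>)\<^sup>2 else 1)"

definition lisr_run :: "nat \<Rightarrow> (nat \<Rightarrow> real^'d \<Rightarrow> real^'d) \<Rightarrow> (nat \<Rightarrow> real^'d \<Rightarrow> real^'d^'d)
    \<Rightarrow> (nat \<Rightarrow> real) \<Rightarrow> (nat \<Rightarrow> real^'d) \<Rightarrow> (nat \<Rightarrow> nat \<Rightarrow> real^'d)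
    \<Rightarrow> (nat \<Rightarrow> nat \<Rightarrow> real^'d^'d) \<Rightarrow> (nat \<Rightarrow> real^'k^'d) \<Rightarrow> bool" where
  "lisr_run n g H om x z B U \<longleftrightarrow>
     (\<forall>i\<in>{1..n}. z i 0 = x 0) \<and>
     (\<forall>t. let it = t mod n + 1 in
        x (Suc t) = matrix_inv (\<Sum>i\<in>{1..n}. B i t) *v
                      ((\<Sum>i\<in>{1..n}. B i t *v z i t) - (\<Sum>i\<in>{1..n}. g i (z i t))) \<and>
        (\<forall>i\<in>{1..n}. z i (Suc t) = (if i = it then x (Suc t) else z i t)) \<and>
        is_Ek (B it t - H it (z it (Suc t))) (U t) \<and>
        (\<forall>i\<in>{1..n}. B i (Suc t) =
            (if i = it then om (Suc t) *\<^sub>R SRk (B i t) (H i (z i (Suc t))) (U t)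
             else om (Suc t) *\<^sub>R B i t)))"

end

(*
  Two quantities are propagated together by induction over the iterations. First, every
  B_i^t exceeds the Hessian of f_i at z_i^t by a positive semidefinite matrix of trace O(rho mu),
  so the aggregated step is an inexact Newton step: its error equation is a sum of terms of size
  rho mu |z_i - x*|, and the mu-coercivity of sum_i B_i^t turns this into a contraction by rho per
  epoch of n iterations. Second, the greedy SR-k update removes from tr(B - Hessian) at least
  its k largest diagonal entries, hence a fraction k/d of it, while between two visits of f_i
  the iterate moves by O(rho^q r0) and the Hessian by a relative O(M sqrt L r0 rho^q); the
  correction factor omega compensates this drift and keeps B above the Hessian. Hence
  nu_{q+1} <= (1 - k/d) (E_q nu_q + D (E_q - 1)) with E_q = 1 + O(rho^q), whose solution is
  at most (1 - k/d)^q delta. The constants r0 and sigma0 are chosen so small that delta <= rho/8,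
  which is exactly what makes the trace bound of the first part hold and closes the induction.
*)

theory Submission
  imports Defs
begin

section \<open>Quadratic forms, positive semidefinite matrices and traces\<close>

lemma inner_matrix_vector_transpose: "x \<bullet> ((A::real^_^_) *v y) = (transpose A *v x) \<bullet> y"
  by (simp only: transpose_matrix_vector dot_lmul_matrix)

lemma inner_transpose_matrix_vector: "x \<bullet> (transpose (A::real^_^_) *v y) = (A *v x) \<bullet> y"
  using inner_matrix_vector_transpose[of x "transpose A" y] by (simp only: transpose_transpose)

lemma symmetric_matrix_inner_swap: "symmetric_matrix A \<Longrightarrow> x \<bullet> (A *v y) = (A *v x) \<bullet> y"
  unfolding symmetric_matrix_def using inner_matrix_vector_transpose[of x A y] by simp

lemma symmetric_matrix_quadratic_swap: "symmetric_matrix A \<Longrightarrow> x \<bullet> (A *v y) = y \<bullet> (A *v x)"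
  by (metis symmetric_matrix_inner_swap inner_commute)

lemma symmetric_matrix_diff:
  "symmetric_matrix A \<Longrightarrow> symmetric_matrix B \<Longrightarrow> symmetric_matrix (A - B)"
  unfolding symmetric_matrix_def by (simp add: transpose_def vec_eq_iff)

lemma symmetric_matrix_scaleR: "symmetric_matrix A \<Longrightarrow> symmetric_matrix (c *\<^sub>R A)"
  by (simp add: symmetric_matrix_def transpose_scalar)

lemma symmetric_matrix_entry: "symmetric_matrix A \<Longrightarrow> A $ i $ j = A $ j $ i"
  unfolding symmetric_matrix_def by (metis transpose_def vec_lambda_beta)

lemma transpose_eq_self_if_inner_swap:
  fixes M :: "real^'n^'n"
  assumes "\<And>u v. u \<bullet> (M *v v) = (M *v u) \<bullet> v"
  shows "transpose M = M"
proof -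
  have "transpose M *v u = M *v u" for u
  proof -
    let ?w = "transpose M *v u - M *v u"
    have "?w \<bullet> ?w = (transpose M *v u) \<bullet> ?w - (M *v u) \<bullet> ?w" by (simp add: inner_diff_left)
    also have "(transpose M *v u) \<bullet> ?w = u \<bullet> (M *v ?w)" by (simp add: inner_matrix_vector_transpose)
    also have "\<dots> = (M *v u) \<bullet> ?w" by (rule assms)
    finally show ?thesis by simp
  qed
  then show ?thesis by (simp add: matrix_eq)
qed

lemma matrix_vector_mult_scaleR_left: "(c *\<^sub>R (A :: real^'n^'m)) *v v = c *\<^sub>R (A *v v)"
  by (simp add: scaleR_matrix_vector_assoc)

lemma matrix_vector_mult_sum_left:
  "finite I \<Longrightarrow> (\<Sum>i\<in>I. (A i :: real^'n^'m)) *v v = (\<Sum>i\<in>I. A i *v v)"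
  by (induction I rule: finite_induct) (auto simp: matrix_vector_mult_add_rdistrib)

lemma matrix_vector_mult_component: "(A *v v) $ i = A $ i \<bullet> v"
  by (simp add: matrix_vector_mult_def inner_vec_def)

lemma inner_axis_matrix_vector_axis: "axis i 1 \<bullet> (A *v axis j (1::real)) = A $ i $ j"
  by (simp add: matrix_vector_mult_basis column_def inner_axis')

lemma trace_eq_sum_quadratic_axis:
  "trace (A::real^'n^'n) = (\<Sum>i\<in>UNIV. axis i 1 \<bullet> (A *v axis i 1))"
  by (simp add: trace_def inner_axis_matrix_vector_axis)

lemma trace_scaleR: "trace (c *\<^sub>R (A::real^'n^'n)) = c * trace A"
  by (simp add: trace_def sum_distrib_left)

lemma loewner_le_iff_quadratic:
  "loewner_le A B \<longleftrightarrow> (\<forall>v. v \<bullet> (A *v v) \<le> v \<bullet> (B *v v))"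
  by (simp add: loewner_le_def psd_def matrix_vector_mult_diff_rdistrib inner_diff_right)

lemma psd_diagonal_nonneg: "psd A \<Longrightarrow> 0 \<le> A $ i $ i"
  by (metis inner_axis_matrix_vector_axis psd_def)

lemma psd_trace_nonneg: "psd A \<Longrightarrow> 0 \<le> trace (A::real^'n^'n)"
  unfolding trace_def by (simp add: psd_diagonal_nonneg sum_nonneg)

lemma psd_scaleR_diff:
  assumes "loewner_le A G" "symmetric_matrix A" "symmetric_matrix G" "1 \<le> c"
    and "\<And>v. 0 \<le> v \<bullet> (A *v v)"
  shows "symmetric_matrix (c *\<^sub>R G - A) \<and> psd (c *\<^sub>R G - A)"
proof
  show "symmetric_matrix (c *\<^sub>R G - A)"
    by (rule symmetric_matrix_diff[OF symmetric_matrix_scaleR]) (use assms in auto)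
  show "psd (c *\<^sub>R G - A)" unfolding psd_def
  proof
    fix v
    have AG: "v \<bullet> (A *v v) \<le> v \<bullet> (G *v v)" using assms(1) loewner_le_iff_quadratic by blast
    have "v \<bullet> (G *v v) \<le> c * (v \<bullet> (G *v v))"
      using assms(4) assms(5)[of v] AG by (simp add: mult_le_cancel_right1)
    then show "0 \<le> v \<bullet> ((c *\<^sub>R G - A) *v v)"
      using AG by (simp add: matrix_vector_mult_diff_rdistrib inner_diff_right matrix_vector_mult_scaleR_left)
  qed
qed

lemma nonneg_quadratic_discriminant:
  fixes a b c :: real
  assumes "\<And>t. 0 \<le> a + 2*b*t + c*t^2" "0 \<le> c"
  shows "b^2 \<le> a * c"
proof (cases "c = 0")
  case True
  show ?thesis
  proof (rule ccontr)
    assume "\<not> ?thesis"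
    then have "b \<noteq> 0" using True by simp
    have "0 \<le> a + 2*b*(-(a+1)/(2*b)) + c*(-(a+1)/(2*b))^2" by (rule assms(1))
    also have "\<dots> = -1" using True \<open>b \<noteq> 0\<close> by (simp add: field_simps)
    finally show False by simp
  qed
next
  case False
  then have c: "c > 0" using assms(2) by simp
  have "0 \<le> a + 2*b*(-b/c) + c*(-b/c)^2" by (rule assms(1))
  also have "\<dots> = a - b^2/c" using c by (simp add: field_simps power2_eq_square)
  finally have "b^2/c \<le> a" by simp
  then show ?thesis using c by (simp add: field_simps mult.commute)
qed

lemma psd_offdiagonal_sq_le:
  assumes s: "symmetric_matrix (A::real^'n^'n)" and p: "psd A"
  shows "(A $ i $ j)^2 \<le> A $ i $ i * A $ j $ j"
proof -
  have "0 \<le> A$i$i + 2*(A$i$j)*t + A$j$j*t^2" for t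
  proof -
    let ?w = "axis i 1 + t *\<^sub>R axis j (1::real)"
    have "0 \<le> ?w \<bullet> (A *v ?w)" using p psd_def by blast
    also have "\<dots> = A$i$i + t * A$i$j + t * A$j$i + t*t*A$j$j"
      by (simp add: matrix_vector_right_distrib matrix_vector_mult_scaleR inner_add_left
          inner_add_right inner_axis_matrix_vector_axis algebra_simps)
    finally show ?thesis
      using symmetric_matrix_entry[OF s, of j i] by (simp add: power2_eq_square algebra_simps)
  qed
  from nonneg_quadratic_discriminant[OF this psd_diagonal_nonneg[OF p]] show ?thesis .
qed

lemma psd_norm_matrix_vector_le_trace:
  assumes s: "symmetric_matrix (A::real^'n^'n)" and p: "psd A"
  shows "norm (A *v v) \<le> trace A * norm v"
proof -
  have row: "(A$i) \<bullet> (A$i) \<le> A$i$i * trace A" for i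
  proof -
    have "(A$i) \<bullet> (A$i) = (\<Sum>j\<in>UNIV. (A$i$j)^2)" by (simp add: inner_vec_def power2_eq_square)
    also have "\<dots> \<le> (\<Sum>j\<in>UNIV. A$i$i * A$j$j)"
      by (rule sum_mono) (rule psd_offdiagonal_sq_le[OF s p])
    also have "\<dots> = A$i$i * trace A" by (simp add: trace_def sum_distrib_left)
    finally show ?thesis .
  qed
  have "(A *v v) \<bullet> (A *v v) = (\<Sum>i\<in>UNIV. ((A$i) \<bullet> v)^2)"
    by (simp add: inner_vec_def matrix_vector_mult_component power2_eq_square)
  also have "\<dots> \<le> (\<Sum>i\<in>UNIV. A$i$i * trace A * (v \<bullet> v))"
  proof (rule sum_mono)
    fix i
    have "((A$i) \<bullet> v)^2 \<le> ((A$i) \<bullet> (A$i)) * (v \<bullet> v)" by (metis Cauchy_Schwarz_ineq)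
    also have "\<dots> \<le> A$i$i * trace A * (v \<bullet> v)" by (rule mult_right_mono[OF row]) simp
    finally show "((A$i) \<bullet> v)^2 \<le> A$i$i * trace A * (v \<bullet> v)" .
  qed
  also have "\<dots> = (\<Sum>i\<in>UNIV. A$i$i) * (trace A * (v \<bullet> v))"
    by (simp add: sum_distrib_right mult.assoc)
  also have "\<dots> = trace A * (trace A * (v \<bullet> v))" by (simp add: trace_def)
  also have "\<dots> = (trace A * norm v)^2"
    by (simp add: power2_eq_square power2_norm_eq_inner[symmetric] algebra_simps)
  finally have "(norm (A *v v))^2 \<le> (trace A * norm v)^2" by (simp add: power2_norm_eq_inner)
  then show ?thesis by (rule power2_le_imp_le) (simp add: psd_trace_nonneg[OF p])
qed

lemma norm_matrix_vector_le_mat_norm: "norm (A *v v) \<le> mat_norm A * norm v"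
  unfolding mat_norm_def using onorm[OF matrix_vector_mul_bounded_linear] .

lemma mat_norm_nonneg: "0 \<le> mat_norm A"
  unfolding mat_norm_def by (simp add: onorm_pos_le matrix_vector_mul_bounded_linear)

lemma abs_inner_matrix_vector_le_mat_norm: "\<bar>u \<bullet> (A *v v)\<bar> \<le> mat_norm A * norm u * norm v"
proof -
  have "\<bar>u \<bullet> (A *v v)\<bar> \<le> norm u * norm (A *v v)" by (rule Cauchy_Schwarz_ineq2)
  also have "\<dots> \<le> norm u * (mat_norm A * norm v)"
    by (simp add: norm_matrix_vector_le_mat_norm mult_left_mono)
  finally show ?thesis by (simp add: algebra_simps)
qed

lemma abs_trace_le_mat_norm: "\<bar>trace (A::real^'n^'n)\<bar> \<le> real CARD('n) * mat_norm A"
proof -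
  have diag: "\<bar>A$i$i\<bar> \<le> mat_norm A" for i
    using abs_inner_matrix_vector_le_mat_norm[of "axis i 1" A "axis i 1"]
    by (simp add: inner_axis_matrix_vector_axis)
  have "\<bar>trace A\<bar> \<le> (\<Sum>i\<in>UNIV. \<bar>A$i$i\<bar>)" unfolding trace_def by (rule sum_abs)
  also have "\<dots> \<le> (\<Sum>i\<in>(UNIV::'n set). mat_norm A)" by (rule sum_mono) (rule diag)
  finally show ?thesis by simp
qed

lemma invertible_if_coercive:
  fixes A :: "real^'n^'n"
  assumes "\<And>v. c * (v \<bullet> v) \<le> v \<bullet> (A *v v)" "0 < c"
  shows "invertible A"
proof -
  have "inj ((*v) A)"
  proof (rule injI)
    fix u w assume "A *v u = A *v w"
    then have "A *v (u - w) = 0" by (simp add: matrix_vector_mult_diff_distrib)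
    then have "c * ((u - w) \<bullet> (u - w)) \<le> 0" using assms(1)[of "u - w"] by simp
    then have "(u - w) \<bullet> (u - w) \<le> 0" using assms(2) by (simp add: mult_le_0_iff)
    then have "(u - w) \<bullet> (u - w) = 0" using inner_ge_zero[of "u - w"] by linarith
    then show "u = w" by simp
  qed
  then show ?thesis using matrix_left_invertible_injective invertible_left_inverse by blast
qed

lemma norm_matrix_vector_ge_if_coercive:
  fixes A :: "real^'n^'n"
  assumes "\<And>v. c * (v \<bullet> v) \<le> v \<bullet> (A *v v)"
  shows "c * norm v \<le> norm (A *v v)"
proof (cases "v = 0")
  case False
  have "c * norm v * norm v = c * (v \<bullet> v)" by (simp add: power2_norm_eq_inner[symmetric] power2_eq_square)
  also have "\<dots> \<le> v \<bullet> (A *v v)" by (rule assms(1))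
  also have "\<dots> \<le> norm v * norm (A *v v)" by (rule Cauchy_Schwarz_ineq2[THEN abs_le_D1])
  finally show ?thesis using False by (simp add: mult.commute)
qed simp

lemma matrix_inv_right:
  fixes A :: "real^'n^'n"
  assumes "invertible A" shows "A *v (matrix_inv A *v w) = w"
proof -
  have "A ** matrix_inv A = mat 1"
    using assms unfolding invertible_def matrix_inv_def by (metis (mono_tags, lifting) someI_ex)
  then show ?thesis by (simp add: matrix_vector_mul_assoc)
qed

section \<open>The Moore--Penrose pseudoinverse of a symmetric matrix\<close>

definition penrose_inverse :: "real^'n^'m \<Rightarrow> real^'m^'n \<Rightarrow> bool" where
 "penrose_inverse A X \<longleftrightarrow> A ** X ** A = A \<and> X ** A ** X = X \<and>
     transpose (A ** X) = A ** X \<and> transpose (X ** A) = X ** A"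

lemma penrose_inverse_unique:
  assumes "penrose_inverse A X" "penrose_inverse A Y" shows "X = Y"
proof -
  have a1: "A ** X ** A = A" and a2: "X ** A ** X = X" and a3: "transpose (A ** X) = A ** X"
    and a4: "transpose (X ** A) = X ** A"
    and b1: "A ** Y ** A = A" and b2: "Y ** A ** Y = Y" and b3: "transpose (A ** Y) = A ** Y"
    and b4: "transpose (Y ** A) = Y ** A"
    using assms unfolding penrose_inverse_def by auto
  have tA1: "transpose A = transpose A ** transpose (A ** Y)"
  proof -
    have "transpose A ** transpose (A ** Y) = transpose (A ** Y ** A)"
      by (simp add: matrix_transpose_mul matrix_mul_assoc)
    then show ?thesis using b1 by simp
  qed
  have tA2: "transpose A = transpose (X ** A) ** transpose A"
  proof -
    have "transpose (X ** A) ** transpose A = transpose (A ** X ** A)"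
      by (simp add: matrix_transpose_mul matrix_mul_assoc)
    then show ?thesis using a1 by simp
  qed
  have "X = X ** (A ** X)" using a2 by (simp add: matrix_mul_assoc)
  also have "\<dots> = X ** transpose (A ** X)" using a3 by simp
  also have "\<dots> = X ** (transpose X ** transpose A)" by (simp add: matrix_transpose_mul)
  also have "\<dots> = X ** (transpose X ** (transpose A ** transpose (A ** Y)))" using tA1 by simp
  also have "\<dots> = X ** transpose (A ** X) ** transpose (A ** Y)"
    by (simp add: matrix_transpose_mul matrix_mul_assoc)
  also have "\<dots> = X ** (A ** X) ** (A ** Y)" using a3 b3 by simp
  also have "\<dots> = (X ** A ** X) ** A ** Y" by (simp add: matrix_mul_assoc)
  also have "\<dots> = X ** A ** Y" using a2 by simp
  finally have X: "X = X ** A ** Y" .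
  have "Y = (Y ** A) ** Y" using b2 by simp
  also have "\<dots> = transpose (Y ** A) ** Y" using b4 by simp
  also have "\<dots> = transpose A ** transpose Y ** Y" by (simp add: matrix_transpose_mul)
  also have "\<dots> = transpose (X ** A) ** transpose A ** transpose Y ** Y" using tA2 by simp
  also have "\<dots> = transpose (X ** A) ** transpose (Y ** A) ** Y"
    by (simp add: matrix_transpose_mul matrix_mul_assoc)
  also have "\<dots> = (X ** A) ** (Y ** A) ** Y" using a4 b4 by simp
  also have "\<dots> = X ** A ** (Y ** A ** Y)" by (simp add: matrix_mul_assoc)
  also have "\<dots> = X ** A ** Y" using b2 by simp
  finally show ?thesis using X by simp
qed

text \<open>\<open>S (S v) = 0\<close> forces \<open>S v = 0\<close>, so \<open>S\<close> is injective, hence bijective, on its range.\<close>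

lemma symmetric_matrix_range_inverse:
  fixes S :: "real^'n^'n"
  assumes s: "symmetric_matrix S"
  obtains h where "linear h" "\<And>v. h v \<in> range ((*v) S)"
    "\<And>w. w \<in> range ((*v) S) \<Longrightarrow> S *v h w = w"
    "\<And>w. w \<in> range ((*v) S) \<Longrightarrow> h (S *v w) = w"
proof -
  define f where "f = (\<lambda>v. S *v v)"
  define V where "V = range f"
  have lf: "linear f" unfolding f_def by (rule matrix_vector_mul_linear)
  have sV: "subspace V" unfolding V_def by (rule linear_subspace_image[OF lf subspace_UNIV])
  have inj: "inj_on f V"
  proof (rule inj_onI)
    fix x y assume "x \<in> V" "y \<in> V" "f x = f y"
    then obtain a b where ab: "x = S *v a" "y = S *v b" unfolding V_def f_def by auto
    have "S *v (S *v (a - b)) = 0" using \<open>f x = f y\<close> ab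
      by (simp add: f_def matrix_vector_mult_diff_distrib)
    moreover have "(S *v (a - b)) \<bullet> (S *v (a - b)) = (a - b) \<bullet> (S *v (S *v (a - b)))"
      by (rule symmetric_matrix_quadratic_swap[OF s])
    ultimately have "S *v (a - b) = 0" by simp
    then show "x = y" using ab by (simp add: matrix_vector_mult_diff_distrib)
  qed
  have "f ` V = V"
  proof (rule subspace_dim_equal)
    show "subspace (f ` V)" by (rule linear_subspace_image[OF lf sV])
    show "f ` V \<subseteq> V" unfolding V_def by auto
    have "span V = V" using sV by (simp add: span_eq_iff)
    then have "inj_on f (span V)" using inj by (simp only:)
    then show "dim V \<le> dim (f ` V)" using dim_image_eq[OF lf] by simp
  qed (rule sV)
  then have surj: "\<exists>c\<in>V. S *v c = w" if "w \<in> V" for w using that unfolding f_def by force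
  obtain h where h: "range h \<subseteq> V" "linear h" "\<forall>v\<in>V. h (f v) = v"
    using real_vector.linear_exists_left_inverse_on[OF lf sV inj] by blast
  show thesis
  proof
    show "S *v h w = w" if "w \<in> range ((*v) S)" for w
    proof -
      have "w \<in> V" using that unfolding V_def f_def .
      then obtain c where c: "c \<in> V" "S *v c = w" using surj by blast
      then have "h w = c" using h(3) unfolding f_def by blast
      then show ?thesis using c(2) by simp
    qed
  qed (use h in \<open>auto simp: V_def f_def\<close>)
qed

text \<open>For symmetric \<open>S\<close> with inverse \<open>h\<close> on its range, \<open>X v = h (h (S v))\<close> satisfies the Penrose
  equations: \<open>S X = X S\<close> is the orthogonal projection onto the range of \<open>S\<close>.\<close>

lemma penrose_inverse_exists_if_symmetric:
  fixes S :: "real^'n^'n"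
  assumes s: "symmetric_matrix S"
  shows "\<exists>X. penrose_inverse S X"
proof -
  obtain g where g: "linear g" "\<And>v. g v \<in> range ((*v) S)"
    "\<And>w. w \<in> range ((*v) S) \<Longrightarrow> S *v g w = w"
    "\<And>w. w \<in> range ((*v) S) \<Longrightarrow> g (S *v w) = w"
    using symmetric_matrix_range_inverse[OF s] by blast
  define P where "P v = g (S *v v)" for v
  have PV: "P v \<in> range ((*v) S)" for v unfolding P_def by (rule g(2))
  have SP: "S *v P v = S *v v" for v unfolding P_def by (rule g(3)) simp
  have Psym: "u \<bullet> P v = P u \<bullet> v" for u v
  proof -
    have orth: "(a - P a) \<bullet> P b = 0" for a b
    proof -
      obtain c where c: "S *v c = P b" using PV[of b] by auto
      have "(a - P a) \<bullet> (S *v c) = c \<bullet> (S *v (a - P a))" by (rule symmetric_matrix_quadratic_swap[OF s])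
      also have "\<dots> = 0" by (simp add: matrix_vector_mult_diff_distrib SP)
      finally show ?thesis using c by simp
    qed
    have "u \<bullet> P v = P u \<bullet> P v" using orth[of u v] by (simp add: inner_diff_left)
    moreover have "P u \<bullet> v = P u \<bullet> P v"
      using orth[of v u] by (simp add: inner_diff_left inner_diff_right inner_commute)
    ultimately show ?thesis by simp
  qed
  define X where "X = matrix (\<lambda>v. g (g (S *v v)))"
  have lX: "linear (\<lambda>v. g (g (S *v v)))"
    using linear_compose[OF linear_compose[OF matrix_vector_mul_linear g(1)] g(1)] by (simp add: o_def)
  have Xv: "X *v v = g (P v)" for v unfolding X_def P_def using matrix_vector_mul(2)[OF lX] by metis
  have XS: "X *v (S *v v) = P v" for v
    using Xv[of "S *v v"] unfolding P_def using g(4)[of "S *v v"] by simp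
  have SX: "S *v (X *v v) = P v" for v using Xv g(3)[OF PV] by simp
  have "S ** X ** S = S"
    by (simp add: matrix_eq matrix_vector_mul_assoc[symmetric] XS SP)
  moreover have "X ** S ** X = X"
  proof -
    have "X *v (S *v (X *v v)) = X *v v" for v
    proof -
      have "X *v (S *v (X *v v)) = g (S *v (X *v v))" by (simp only: XS P_def)
      also have "\<dots> = g (P v)" by (simp only: SX)
      also have "\<dots> = X *v v" by (simp only: Xv)
      finally show ?thesis .
    qed
    then show ?thesis by (simp add: matrix_eq matrix_vector_mul_assoc[symmetric])
  qed
  moreover have "transpose (S ** X) = S ** X"
    by (rule transpose_eq_self_if_inner_swap) (simp add: matrix_vector_mul_assoc[symmetric] SX Psym)
  moreover have "transpose (X ** S) = X ** S"
    by (rule transpose_eq_self_if_inner_swap) (simp add: matrix_vector_mul_assoc[symmetric] XS Psym)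
  ultimately show ?thesis unfolding penrose_inverse_def by blast
qed

lemma pinv_of_symmetric:
  fixes S :: "real^'n^'n"
  assumes s: "symmetric_matrix S"
  shows "penrose_inverse S (pinv S)" "symmetric_matrix (pinv S)"
proof -
  obtain X where X: "penrose_inverse S X" using penrose_inverse_exists_if_symmetric[OF s] by blast
  have ex1: "\<exists>!X. penrose_inverse S X" using X penrose_inverse_unique by blast
  have "pinv S = (THE X. penrose_inverse S X)" unfolding pinv_def penrose_inverse_def by simp
  then show P: "penrose_inverse S (pinv S)" using theI'[OF ex1] by simp
  have tS: "transpose S = S" using s symmetric_matrix_def by auto
  define Z where "Z = pinv S"
  have p1: "S ** Z ** S = S" and p2: "Z ** S ** Z = Z" and p3: "transpose (S ** Z) = S ** Z"
    and p4: "transpose (Z ** S) = Z ** S" using P unfolding penrose_inverse_def Z_def by auto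
  have q1: "S ** transpose Z ** S = S"
  proof -
    have "S ** transpose Z ** S = transpose (S ** Z ** S)" by (simp add: matrix_transpose_mul tS matrix_mul_assoc)
    then show ?thesis using p1 tS by simp
  qed
  have q2: "transpose Z ** S ** transpose Z = transpose Z"
  proof -
    have "transpose Z ** S ** transpose Z = transpose (Z ** S ** Z)" by (simp add: matrix_transpose_mul tS matrix_mul_assoc)
    then show ?thesis using p2 by simp
  qed
  have q3: "S ** transpose Z = Z ** S"
  proof -
    have "S ** transpose Z = transpose (Z ** S)" by (simp add: matrix_transpose_mul tS)
    then show ?thesis using p4 by simp
  qed
  have q4: "transpose Z ** S = S ** Z"
  proof -
    have "transpose Z ** S = transpose (S ** Z)" by (simp add: matrix_transpose_mul tS)
    then show ?thesis using p3 by simp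
  qed
  have "penrose_inverse S (transpose (pinv S))"
    unfolding penrose_inverse_def Z_def[symmetric] using q1 q2 q3 q4 p3 p4 by simp
  then show "symmetric_matrix (pinv S)" unfolding symmetric_matrix_def
    using P penrose_inverse_unique by blast
qed

section \<open>The greedy symmetric rank-\<open>k\<close> update\<close>

lemma greedy_diagonal_sum_ge:
  fixes R :: "real^'d^'d" and \<sigma> :: "'k::finite \<Rightarrow> 'd"
  assumes inj: "inj \<sigma>" and gr: "\<And>i j. i \<notin> range \<sigma> \<Longrightarrow> R$i$i \<le> R$(\<sigma> j)$(\<sigma> j)"
  shows "real CARD('k) * trace R \<le> real CARD('d) * (\<Sum>j\<in>UNIV. R$(\<sigma> j)$(\<sigma> j))"
proof -
  define sel where "sel = (\<Sum>j\<in>UNIV. R$(\<sigma> j)$(\<sigma> j))"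
  define m where "m = Min ((\<lambda>j. R$(\<sigma> j)$(\<sigma> j)) ` UNIV)"
  have mle: "m \<le> R$(\<sigma> j)$(\<sigma> j)" for j unfolding m_def by (rule Min_le) auto
  have ksel: "real CARD('k) * m \<le> sel"
  proof -
    have "(\<Sum>j\<in>(UNIV::'k set). m) \<le> sel" unfolding sel_def by (rule sum_mono) (rule mle)
    then show ?thesis by simp
  qed
  have "m \<in> (\<lambda>j. R$(\<sigma> j)$(\<sigma> j)) ` UNIV" unfolding m_def by (rule Min_in) auto
  then have out: "R$i$i \<le> m" if "i \<notin> range \<sigma>" for i using gr[OF that] by auto
  have cr: "card (range \<sigma>) = CARD('k)" using card_image[OF inj_on_subset[OF inj]] by simp
  have cc: "card (- range \<sigma>) = CARD('d) - CARD('k)"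
    using card_Diff_subset[of "range \<sigma>" UNIV] cr by (simp add: Compl_eq_Diff_UNIV)
  have kd: "CARD('k) \<le> CARD('d)" using cr card_mono[of "UNIV::'d set" "range \<sigma>"] by simp
  have split: "trace R = (\<Sum>i\<in>range \<sigma>. R$i$i) + (\<Sum>i\<in>- range \<sigma>. R$i$i)"
  proof -
    have "trace R = (\<Sum>i\<in>range \<sigma> \<union> - range \<sigma>. R$i$i)" by (simp only: trace_def Compl_partition)
    also have "\<dots> = (\<Sum>i\<in>range \<sigma>. R$i$i) + (\<Sum>i\<in>- range \<sigma>. R$i$i)"
      by (rule sum.union_disjoint) auto
    finally show ?thesis .
  qed
  have s1: "(\<Sum>i\<in>range \<sigma>. R$i$i) = sel"
    unfolding sel_def using sum.reindex[OF inj_on_subset[OF inj], of UNIV "\<lambda>i. R$i$i"] by simp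
  have s2: "(\<Sum>i\<in>- range \<sigma>. R$i$i) \<le> real (CARD('d) - CARD('k)) * m"
  proof -
    have "(\<Sum>i\<in>- range \<sigma>. R$i$i) \<le> (\<Sum>i\<in>- range \<sigma>. m)" by (rule sum_mono) (simp add: out)
    then show ?thesis using cc by simp
  qed
  have dk: "real (CARD('d) - CARD('k)) = real CARD('d) - real CARD('k)" using kd by simp
  have "real CARD('k) * trace R
      \<le> real CARD('k) * sel + real CARD('k) * ((real CARD('d) - real CARD('k)) * m)"
    using split s1 s2 dk by (simp add: distrib_left mult_left_mono)
  also have "real CARD('k) * ((real CARD('d) - real CARD('k)) * m)
      = (real CARD('d) - real CARD('k)) * (real CARD('k) * m)"
    by simp
  also have "\<dots> \<le> (real CARD('d) - real CARD('k)) * sel" using ksel kd by (intro mult_left_mono) auto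
  finally show ?thesis unfolding sel_def by (simp add: algebra_simps)
qed

lemma psd_pinv_of_psd:
  assumes s: "symmetric_matrix S" and p: "\<And>w. 0 \<le> w \<bullet> (S *v w)"
  shows "0 \<le> w \<bullet> (pinv S *v w)"
proof -
  have XSX: "pinv S ** S ** pinv S = pinv S" and sX: "symmetric_matrix (pinv S)"
    using pinv_of_symmetric[OF s] unfolding penrose_inverse_def by auto
  have "w \<bullet> (pinv S *v w) = w \<bullet> (pinv S *v (S *v (pinv S *v w)))"
    by (simp add: matrix_vector_mul_assoc matrix_mul_assoc XSX)
  also have "\<dots> = (pinv S *v w) \<bullet> (S *v (pinv S *v w))"
    by (rule symmetric_matrix_inner_swap[OF sX])
  finally show ?thesis using p by simp
qed

lemma symmetric_matrix_compression:
  fixes R :: "real^'d^'d" and U :: "real^'k::finite^'d"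
  shows "symmetric_matrix R \<Longrightarrow> symmetric_matrix (transpose U ** R ** U)"
  by (simp add: symmetric_matrix_def matrix_transpose_mul matrix_mul_assoc)

lemma quadratic_compression:
  fixes R :: "real^'d^'d" and U :: "real^'k::finite^'d"
  shows "w \<bullet> ((transpose U ** R ** U) *v w) = (U *v w) \<bullet> (R *v (U *v w))"
  unfolding matrix_vector_mul_assoc[symmetric] by (rule inner_transpose_matrix_vector)

lemma quadratic_schur_correction:
  fixes R :: "real^'d^'d" and U :: "real^'k::finite^'d" and X :: "real^'k^'k"
  assumes "symmetric_matrix R"
  shows "v \<bullet> ((R ** U ** X ** transpose U ** R) *v v)
    = (transpose U *v (R *v v)) \<bullet> (X *v (transpose U *v (R *v v)))"
proof -
  have "v \<bullet> ((R ** U ** X ** transpose U ** R) *v v)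
      = v \<bullet> (R *v (U *v (X *v (transpose U *v (R *v v)))))"
    by (simp only: matrix_vector_mul_assoc[symmetric])
  also have "\<dots> = (R *v v) \<bullet> (U *v (X *v (transpose U *v (R *v v))))"
    by (rule symmetric_matrix_inner_swap[OF assms])
  also have "\<dots> = (transpose U *v (R *v v)) \<bullet> (X *v (transpose U *v (R *v v)))"
    by (rule inner_matrix_vector_transpose)
  finally show ?thesis .
qed

lemma selection_matrix_axis:
  "U = (\<chi> r c. if r = \<sigma> c then 1 else 0) \<Longrightarrow> U *v axis j 1 = axis (\<sigma> j) (1::real)"
  unfolding matrix_vector_mult_basis by (simp add: column_def axis_def vec_eq_iff)

context
  fixes R :: "real^'d^'d" and U :: "real^'k::finite^'d"
  assumes sR: "symmetric_matrix R" and pR: "psd R"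
begin

text \<open>Expand \<open>0 \<le> (v - U w) \<bullet> R (v - U w)\<close> at \<open>w = (U\<^sup>T R U)\<^sup>+ U\<^sup>T R v\<close>.\<close>

lemma psd_diff_schur_correction:
  "psd (R - R ** U ** pinv (transpose U ** R ** U) ** transpose U ** R)"
  unfolding psd_def
proof
  fix v
  define S where "S = transpose U ** R ** U"
  define X where "X = pinv S"
  have sX: "symmetric_matrix X" and XSX: "X ** S ** X = X"
    using pinv_of_symmetric[OF symmetric_matrix_compression[OF sR]] unfolding X_def S_def penrose_inverse_def
    by auto
  define y where "y = transpose U *v (R *v v)"
  define w where "w = X *v y"
  have "0 \<le> (v - U *v w) \<bullet> (R *v (v - U *v w))" using pR psd_def by blast
  also have "\<dots> = v \<bullet> (R *v v) - 2 * ((U *v w) \<bullet> (R *v v)) + (U *v w) \<bullet> (R *v (U *v w))"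
    using symmetric_matrix_quadratic_swap[OF sR, of v "U *v w"]
    by (simp add: matrix_vector_mult_diff_distrib inner_diff_left inner_diff_right)
  also have "(U *v w) \<bullet> (R *v v) = y \<bullet> (X *v y)"
  proof -
    have "(U *v w) \<bullet> (R *v v) = w \<bullet> y" unfolding y_def by (rule inner_transpose_matrix_vector[symmetric])
    then show ?thesis unfolding w_def by (simp add: inner_commute)
  qed
  also have "(U *v w) \<bullet> (R *v (U *v w)) = y \<bullet> (X *v y)"
  proof -
    have "(U *v w) \<bullet> (R *v (U *v w)) = w \<bullet> (S *v w)" unfolding S_def by (rule quadratic_compression[symmetric])
    also have "\<dots> = y \<bullet> (X *v (S *v (X *v y)))"
      unfolding w_def by (rule symmetric_matrix_inner_swap[OF sX, symmetric])
    also have "\<dots> = y \<bullet> (X *v y)" by (simp add: matrix_vector_mul_assoc matrix_mul_assoc XSX)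
    finally show ?thesis .
  qed
  finally have "y \<bullet> (X *v y) \<le> v \<bullet> (R *v v)" by simp
  moreover have "v \<bullet> ((R ** U ** X ** transpose U ** R) *v v) = y \<bullet> (X *v y)"
    unfolding y_def by (rule quadratic_schur_correction[OF sR])
  ultimately show "0 \<le> v \<bullet> ((R - R ** U ** pinv (transpose U ** R ** U) ** transpose U ** R) *v v)"
    unfolding X_def S_def by (simp add: matrix_vector_mult_diff_rdistrib inner_diff_right)
qed

lemma selected_diagonal_le_trace_schur_correction:
  fixes \<sigma> :: "'k \<Rightarrow> 'd"
  assumes inj: "inj \<sigma>" and U: "U = (\<chi> r c. if r = \<sigma> c then 1 else 0)"
  shows "(\<Sum>j\<in>UNIV. R$(\<sigma> j)$(\<sigma> j))
    \<le> trace (R ** U ** pinv (transpose U ** R ** U) ** transpose U ** R)"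
proof -
  define S where "S = transpose U ** R ** U"
  define X where "X = pinv S"
  have sX: "symmetric_matrix X" and SXS: "S ** X ** S = S"
    using pinv_of_symmetric[OF symmetric_matrix_compression[OF sR]] unfolding X_def S_def penrose_inverse_def
    by auto
  have Xpsd: "0 \<le> w \<bullet> (X *v w)" for w
    unfolding X_def S_def using psd_pinv_of_psd[OF symmetric_matrix_compression[OF sR]] quadratic_compression pR
    by (metis psd_def)
  have Uax: "U *v axis j 1 = axis (\<sigma> j) 1" for j by (rule selection_matrix_axis[OF U])
  define y where "y i = transpose U *v (R *v axis i 1)" for i
  note quad = quadratic_schur_correction[OF sR, of _ U X]
  have Sj: "S *v axis j 1 = y (\<sigma> j)" for j
    unfolding S_def y_def by (simp only: matrix_vector_mul_assoc[symmetric] Uax)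
  have "(\<Sum>j\<in>UNIV. R$(\<sigma> j)$(\<sigma> j)) = trace S"
    unfolding S_def
    by (simp only: trace_eq_sum_quadratic_axis quadratic_compression Uax inner_axis_matrix_vector_axis)
  also have "\<dots> = trace (S ** X ** S)" using SXS by simp
  also have "\<dots> = (\<Sum>j\<in>UNIV. (S *v axis j 1) \<bullet> (X *v (S *v axis j 1)))"
    using symmetric_matrix_compression[OF sR, of U] unfolding S_def[symmetric]
    by (simp only: trace_eq_sum_quadratic_axis matrix_vector_mul_assoc[symmetric]
        symmetric_matrix_inner_swap)
  also have "\<dots> = (\<Sum>j\<in>UNIV. y (\<sigma> j) \<bullet> (X *v y (\<sigma> j)))" by (simp only: Sj)
  also have "\<dots> = (\<Sum>i\<in>range \<sigma>. y i \<bullet> (X *v y i))"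
    using sum.reindex[OF inj_on_subset[OF inj], of UNIV "\<lambda>i. y i \<bullet> (X *v y i)"] by simp
  also have "\<dots> \<le> (\<Sum>i\<in>UNIV. y i \<bullet> (X *v y i))"
    by (rule sum_mono2) (auto simp: Xpsd)
  also have "\<dots> = trace (R ** U ** X ** transpose U ** R)"
    by (simp only: trace_eq_sum_quadratic_axis quad y_def)
  finally show ?thesis unfolding X_def S_def .
qed

end

lemma SRk_loewner_trace:
  fixes G A :: "real^'d^'d" and U :: "real^'k::finite^'d"
  assumes sG: "symmetric_matrix G" and sA: "symmetric_matrix A" and le: "loewner_le A G"
    and E: "is_Ek (G - A) U"
  shows "symmetric_matrix (SRk G A U) \<and> loewner_le A (SRk G A U) \<and>
     trace (SRk G A U - A) \<le> (1 - real CARD('k) / real CARD('d)) * trace (G - A)"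
proof -
  define R where "R = G - A"
  have sR: "symmetric_matrix R" unfolding R_def by (rule symmetric_matrix_diff[OF sG sA])
  have pR: "psd R" using le unfolding R_def loewner_le_def .
  obtain \<sigma> :: "'k \<Rightarrow> 'd" where inj: "inj \<sigma>"
    and gr: "\<And>i j. i \<notin> range \<sigma> \<Longrightarrow> R$i$i \<le> R$(\<sigma> j)$(\<sigma> j)"
    and Ud: "U = (\<chi> r c. if r = \<sigma> c then 1 else 0)"
    using E unfolding is_Ek_def R_def by blast
  define sel where "sel = (\<Sum>j\<in>UNIV. R$(\<sigma> j)$(\<sigma> j))"
  have final: "trace R - sel \<le> (1 - real CARD('k) / real CARD('d)) * trace R"
  proof -
    have "real CARD('k) / real CARD('d) * trace R \<le> sel"
      using greedy_diagonal_sum_ge[OF inj gr] by (simp add: field_simps sel_def)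
    then show ?thesis by (simp add: algebra_simps)
  qed
  show ?thesis
  proof (cases "G ** U = A ** U")
    case True
    have "(R ** U) *v v = (G ** U) *v v - (A ** U) *v v" for v
      by (simp add: R_def matrix_vector_mul_assoc[symmetric] matrix_vector_mult_diff_rdistrib)
    then have "(R ** U) *v v = 0" for v using True by simp
    then have "sel = 0" unfolding sel_def
      by (simp add: inner_axis_matrix_vector_axis[symmetric] selection_matrix_axis[OF Ud, symmetric]
          matrix_vector_mul_assoc)
    then show ?thesis using True sG final le by (simp add: SRk_def R_def[symmetric])
  next
    case False
    define N where "N = R ** U ** pinv (transpose U ** R ** U) ** transpose U ** R"
    have SR: "SRk G A U = G - N" using False unfolding SRk_def N_def R_def by simp
    have tR: "transpose R = R" using sR symmetric_matrix_def by auto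
    have tX: "transpose (pinv (transpose U ** R ** U)) = pinv (transpose U ** R ** U)"
      using pinv_of_symmetric(2)[OF symmetric_matrix_compression[OF sR]] symmetric_matrix_def
      by auto
    have "transpose N = N" unfolding N_def
      by (simp add: matrix_transpose_mul tR tX matrix_mul_assoc)
    then have "symmetric_matrix (G - N)"
      using sG unfolding symmetric_matrix_def by (simp add: transpose_def vec_eq_iff)
    moreover have "psd (SRk G A U - A)"
      using psd_diff_schur_correction[OF sR pR] unfolding SR N_def R_def by (simp add: algebra_simps)
    moreover have "trace (SRk G A U - A) \<le> trace R - sel"
      using selected_diagonal_le_trace_schur_correction[OF sR pR inj Ud]
      unfolding SR N_def sel_def R_def by (simp add: trace_sub)
    ultimately show ?thesis using SR final unfolding loewner_le_def R_def by simp
  qed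
qed

section \<open>Differentiability facts\<close>

lemma onorm_matrix_vector_diff:
  "onorm ((\<lambda>k. (A::real^'n^'n) *v k) - (\<lambda>k. B *v k)) = mat_norm (A - B)"
proof -
  have "((\<lambda>k. A *v k) - (\<lambda>k. B *v k)) = (\<lambda>k. (A - B) *v k)"
    by (rule ext) (simp add: matrix_vector_mult_diff_rdistrib)
  then show ?thesis by (simp add: mat_norm_def)
qed

lemma linearization_error_bound:
  fixes g :: "real^'d \<Rightarrow> real^'d" and H :: "real^'d \<Rightarrow> real^'d^'d"
  assumes gd: "\<And>y. (g has_derivative (\<lambda>k. H y *v k)) (at y)"
    and lip: "\<And>y z. mat_norm (H y - H z) \<le> Lt * norm (y - z)" and Lt: "0 \<le> Lt"
    and seg: "\<And>t. t \<in> {0..1} \<Longrightarrow> norm (a + t *\<^sub>R (b - a) - x0) \<le> r"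
    and r: "0 \<le> r"
  shows "norm (g b - g a - H x0 *v (b - a)) \<le> norm (b - a) * (Lt * r)"
proof -
  let ?S = "cball x0 r"
  have S: "a + t *\<^sub>R (b - a) \<in> ?S" if "t \<in> {0..1}" for t
    using seg[OF that] by (simp add: dist_norm norm_minus_commute)
  have d: "(g has_derivative (\<lambda>k. H y *v k)) (at y within ?S)" if "y \<in> ?S" for y
    by (rule has_derivative_at_withinI[OF gd])
  have B: "onorm ((\<lambda>k. H y *v k) - (\<lambda>k. H x0 *v k)) \<le> Lt * r" if "y \<in> ?S" for y
  proof -
    have "onorm ((\<lambda>k. H y *v k) - (\<lambda>k. H x0 *v k)) = mat_norm (H y - H x0)" by (rule onorm_matrix_vector_diff)
    also have "\<dots> \<le> Lt * norm (y - x0)" by (rule lip)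
    also have "\<dots> \<le> Lt * r" using that Lt by (intro mult_left_mono) (auto simp: dist_norm norm_minus_commute)
    finally show ?thesis .
  qed
  have x0: "x0 \<in> ?S" using r by simp
  show ?thesis
    using differentiable_bound_linearization[where f = g and f' = "\<lambda>y k. H y *v k", OF S d B x0] by simp
qed

lemma has_real_derivative_along_line:
  fixes f :: "'a::real_inner \<Rightarrow> real"
  assumes fd: "\<And>y. (f has_derivative (\<lambda>k. g y \<bullet> k)) (at y)"
  shows "((\<lambda>s. f (p + s *\<^sub>R u)) has_real_derivative (g (p + s *\<^sub>R u) \<bullet> u)) (at s)"
proof -
  have l: "((\<lambda>s. p + s *\<^sub>R u) has_derivative (\<lambda>t. t *\<^sub>R u)) (at s)"
    by (intro derivative_eq_intros) auto
  have "((\<lambda>s. f (p + s *\<^sub>R u)) has_derivative (\<lambda>t. g (p + s *\<^sub>R u) \<bullet> (t *\<^sub>R u))) (at s)"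
    using has_derivative_compose[OF l fd] by simp
  moreover have "(\<lambda>t. g (p + s *\<^sub>R u) \<bullet> (t *\<^sub>R u)) = (*) (g (p + s *\<^sub>R u) \<bullet> u)"
    by (rule ext) (simp add: mult.commute)
  ultimately show ?thesis unfolding has_field_derivative_def by simp
qed

lemma second_difference_bound:
  fixes f :: "real^'d \<Rightarrow> real" and g :: "real^'d \<Rightarrow> real^'d" and H :: "real^'d \<Rightarrow> real^'d^'d"
  assumes fd: "\<And>y. (f has_derivative (\<lambda>k. g y \<bullet> k)) (at y)"
    and gd: "\<And>y. (g has_derivative (\<lambda>k. H y *v k)) (at y)"
    and lip: "\<And>y z. mat_norm (H y - H z) \<le> Lt * norm (y - z)" and Lt: "0 \<le> Lt"
    and h: "0 < h"
  shows "\<bar>f (x + h *\<^sub>R u + h *\<^sub>R v) - f (x + h *\<^sub>R u) - f (x + h *\<^sub>R v) + f x - h^2 * (u \<bullet> (H x *v v))\<bar>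
     \<le> h^3 * (Lt * (norm u + norm v) * norm u * norm v)"
proof -
  define \<phi> where "\<phi> s = f (x + s *\<^sub>R u + h *\<^sub>R v) - f (x + s *\<^sub>R u)" for s
  define \<phi>' where "\<phi>' s = g (x + s *\<^sub>R u + h *\<^sub>R v) \<bullet> u - g (x + s *\<^sub>R u) \<bullet> u" for s
  have dphi: "(\<phi> has_real_derivative \<phi>' s) (at s)" for s
  proof -
    have e: "\<phi> = (\<lambda>s. f ((x + h *\<^sub>R v) + s *\<^sub>R u) - f (x + s *\<^sub>R u))"
      by (rule ext) (simp add: \<phi>_def algebra_simps)
    show ?thesis unfolding e \<phi>'_def
      using DERIV_diff[OF
          has_real_derivative_along_line[OF fd, where p = "x + h *\<^sub>R v" and u = u and s = s]
          has_real_derivative_along_line[OF fd, where p = x and u = u and s = s]]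
      by (simp add: algebra_simps)
  qed
  obtain \<xi> where \<xi>: "0 < \<xi>" "\<xi> < h" "\<phi> h - \<phi> 0 = (h - 0) * \<phi>' \<xi>"
    using MVT2[OF h, of \<phi> \<phi>'] dphi by blast
  define a where "a = x + \<xi> *\<^sub>R u"
  define b where "b = a + h *\<^sub>R v"
  define r where "r = h * (norm u + norm v)"
  have r: "0 \<le> r" using h by (simp add: r_def)
  have seg: "norm (a + t *\<^sub>R (b - a) - x) \<le> r" if "t \<in> {0..1}" for t
  proof -
    have "a + t *\<^sub>R (b - a) - x = \<xi> *\<^sub>R u + (t * h) *\<^sub>R v" by (simp add: a_def b_def)
    moreover have "norm (\<xi> *\<^sub>R u + (t * h) *\<^sub>R v) \<le> norm (\<xi> *\<^sub>R u) + norm ((t * h) *\<^sub>R v)"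
      by (rule norm_triangle_ineq)
    moreover have "norm (\<xi> *\<^sub>R u) + norm ((t * h) *\<^sub>R v) = \<xi> * norm u + (t * h) * norm v"
      using \<xi> that h by simp
    ultimately have "norm (a + t *\<^sub>R (b - a) - x) \<le> \<xi> * norm u + (t * h) * norm v" by simp
    also have "\<dots> \<le> h * norm u + h * norm v"
      using \<xi> that h by (intro add_mono mult_right_mono) (auto simp: mult_le_cancel_right1)
    finally show ?thesis by (simp add: r_def algebra_simps)
  qed
  have lb: "norm (g b - g a - H x *v (b - a)) \<le> norm (b - a) * (Lt * r)"
    by (rule linearization_error_bound[OF gd lip Lt seg r])
  have ba: "b - a = h *\<^sub>R v" by (simp add: b_def)
  have p': "\<phi>' \<xi> = u \<bullet> (g b - g a)" by (simp add: \<phi>'_def a_def b_def inner_diff_right inner_commute)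
  have "\<bar>\<phi>' \<xi> - h * (u \<bullet> (H x *v v))\<bar> = \<bar>u \<bullet> (g b - g a - H x *v (b - a))\<bar>"
    by (simp add: p' ba inner_diff_right matrix_vector_mult_scaleR)
  also have "\<dots> \<le> norm u * norm (g b - g a - H x *v (b - a))" by (rule Cauchy_Schwarz_ineq2)
  also have "\<dots> \<le> norm u * (norm (b - a) * (Lt * r))" by (rule mult_left_mono[OF lb]) simp
  also have "\<dots> = h^2 * (Lt * (norm u + norm v) * norm u * norm v)"
    using h by (simp add: ba r_def power2_eq_square algebra_simps)
  finally have bd:
    "\<bar>\<phi>' \<xi> - h * (u \<bullet> (H x *v v))\<bar> \<le> h^2 * (Lt * (norm u + norm v) * norm u * norm v)" .
  have "f (x + h *\<^sub>R u + h *\<^sub>R v) - f (x + h *\<^sub>R u) - f (x + h *\<^sub>R v) + f x - h^2 * (u \<bullet> (H x *v v))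
      = h * (\<phi>' \<xi> - h * (u \<bullet> (H x *v v)))"
    using \<xi>(3) by (simp add: \<phi>_def power2_eq_square algebra_simps)
  then have "\<bar>f (x + h *\<^sub>R u + h *\<^sub>R v) - f (x + h *\<^sub>R u) - f (x + h *\<^sub>R v) + f x - h^2 * (u \<bullet> (H x *v v))\<bar>
      = h * \<bar>\<phi>' \<xi> - h * (u \<bullet> (H x *v v))\<bar>" using h by (simp add: abs_mult)
  also have "\<dots> \<le> h * (h^2 * (Lt * (norm u + norm v) * norm u * norm v))"
    using bd h by (intro mult_left_mono) auto
  finally show ?thesis by (simp add: power3_eq_cube power2_eq_square algebra_simps)
qed

lemma eq_0_if_abs_le_mult_all_pos:
  fixes a c :: real
  assumes "\<And>h. 0 < h \<Longrightarrow> \<bar>a\<bar> \<le> h * c" "0 \<le> c"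
  shows "a = 0"
proof (rule ccontr)
  assume "a \<noteq> 0"
  then have pa: "0 < \<bar>a\<bar>" by simp
  have "\<bar>a\<bar> \<le> (\<bar>a\<bar> / (2 * (c + 1))) * c"
    using assms(1)[of "\<bar>a\<bar> / (2 * (c + 1))"] pa assms(2) by simp
  also have "\<dots> = \<bar>a\<bar> * (c / (2 * (c + 1)))" by simp
  also have "\<dots> < \<bar>a\<bar> * 1"
  proof (rule mult_strict_left_mono[OF _ pa])
    show "c / (2 * (c + 1)) < 1" using assms(2) by (simp add: field_simps)
  qed
  also have "\<dots> = \<bar>a\<bar>" by simp
  finally show False by simp
qed

text \<open>The mixed second difference of \<open>f\<close> is symmetric in \<open>u\<close>, \<open>v\<close> and approximates both
  \<open>h\<^sup>2 u \<bullet> H v\<close> and \<open>h\<^sup>2 v \<bullet> H u\<close> up to \<open>O(h\<^sup>3)\<close>.\<close>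

lemma hessian_symmetric:
  fixes f :: "real^'d \<Rightarrow> real" and g :: "real^'d \<Rightarrow> real^'d" and H :: "real^'d \<Rightarrow> real^'d^'d"
  assumes fd: "\<And>y. (f has_derivative (\<lambda>k. g y \<bullet> k)) (at y)"
    and gd: "\<And>y. (g has_derivative (\<lambda>k. H y *v k)) (at y)"
    and lip: "\<And>y z. mat_norm (H y - H z) \<le> Lt * norm (y - z)" and Lt: "0 \<le> Lt"
  shows "symmetric_matrix (H x)"
proof -
  have uv: "u \<bullet> (H x *v v) = v \<bullet> (H x *v u)" for u v
  proof -
    define C where "C = Lt * (norm u + norm v) * norm u * norm v"
    have C: "0 \<le> C" using Lt by (simp add: C_def)
    have "\<bar>u \<bullet> (H x *v v) - v \<bullet> (H x *v u)\<bar> \<le> h * (2 * C)" if h: "0 < h" for h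
    proof -
      define D where "D = f (x + h *\<^sub>R u + h *\<^sub>R v) - f (x + h *\<^sub>R u) - f (x + h *\<^sub>R v) + f x"
      have D2: "D = f (x + h *\<^sub>R v + h *\<^sub>R u) - f (x + h *\<^sub>R v) - f (x + h *\<^sub>R u) + f x"
        unfolding D_def by (simp add: algebra_simps)
      have 1: "\<bar>D - h^2 * (u \<bullet> (H x *v v))\<bar> \<le> h^3 * C"
        unfolding D_def C_def by (rule second_difference_bound[OF fd gd lip Lt h])
      have 2: "\<bar>D - h^2 * (v \<bullet> (H x *v u))\<bar> \<le> h^3 * C"
        unfolding D2 C_def using second_difference_bound[OF fd gd lip Lt h, of x v u] by (simp add: algebra_simps)
      have "h^2 * \<bar>u \<bullet> (H x *v v) - v \<bullet> (H x *v u)\<bar> = \<bar>h^2 * (u \<bullet> (H x *v v) - v \<bullet> (H x *v u))\<bar>"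
        by (simp add: abs_mult)
      also have "\<dots> = \<bar>(D - h^2 * (v \<bullet> (H x *v u))) - (D - h^2 * (u \<bullet> (H x *v v)))\<bar>"
        by (rule arg_cong[where f=abs]) (simp add: algebra_simps)
      also have "\<dots> \<le> h^3 * C + h^3 * C" using 1 2
          abs_triangle_ineq4[of "D - h^2 * (v \<bullet> (H x *v u))" "D - h^2 * (u \<bullet> (H x *v v))"]
        by linarith
      finally have "h^2 * \<bar>u \<bullet> (H x *v v) - v \<bullet> (H x *v u)\<bar> \<le> h^2 * (h * (2 * C))"
        by (simp add: power3_eq_cube power2_eq_square algebra_simps)
      then show ?thesis using h by (simp add: mult_le_cancel_left)
    qed
    then have "u \<bullet> (H x *v v) - v \<bullet> (H x *v u) = 0"
      by (intro eq_0_if_abs_le_mult_all_pos[of _ "2 * C"]) (auto simp: C)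
    then show ?thesis by simp
  qed
  show ?thesis unfolding symmetric_matrix_def
  proof (simp add: vec_eq_iff transpose_def, intro allI)
    fix i j
    show "H x $ j $ i = H x $ i $ j" using uv[of "axis j 1" "axis i 1"] by (simp add: inner_axis_matrix_vector_axis)
  qed
qed

lemma sum_gradients_eq_0_at_minimum:
  fixes f :: "nat \<Rightarrow> real^'d \<Rightarrow> real" and g :: "nat \<Rightarrow> real^'d \<Rightarrow> real^'d"
  assumes fin: "finite I"
    and fd: "\<And>i y. i \<in> I \<Longrightarrow> (f i has_derivative (\<lambda>k. g i y \<bullet> k)) (at y)"
    and mn: "\<And>y. (\<Sum>i\<in>I. f i xs) \<le> (\<Sum>i\<in>I. f i y)"
  shows "(\<Sum>i\<in>I. g i xs) = 0"
proof -
  have "((\<lambda>y. \<Sum>i\<in>I. f i y) has_derivative (\<lambda>k. \<Sum>i\<in>I. g i xs \<bullet> k)) (at xs)"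
    by (rule has_derivative_sum) (rule fd)
  then have "((\<lambda>y. \<Sum>i\<in>I. f i y) has_derivative (\<lambda>k. (\<Sum>i\<in>I. g i xs) \<bullet> k)) (at xs)"
    by (simp add: inner_sum_left)
  from has_derivative_local_min[OF this] mn
  have "(\<lambda>k. (\<Sum>i\<in>I. g i xs) \<bullet> k) = (\<lambda>k. 0)" by (simp add: always_eventually)
  then have "(\<Sum>i\<in>I. g i xs) \<bullet> (\<Sum>i\<in>I. g i xs) = 0" by metis
  then show ?thesis by simp
qed

lemma gradient_taylor_bound:
  fixes g :: "real^'d \<Rightarrow> real^'d" and H :: "real^'d \<Rightarrow> real^'d^'d"
  assumes gd: "\<And>y. (g has_derivative (\<lambda>k. H y *v k)) (at y)"
    and lip: "\<And>y z. mat_norm (H y - H z) \<le> Lt * norm (y - z)" and Lt: "0 \<le> Lt"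
  shows "norm (g z - g y - H z *v (z - y)) \<le> Lt * (norm (z - y))^2"
proof -
  have seg: "norm (y + t *\<^sub>R (z - y) - z) \<le> norm (z - y)" if "t \<in> {0..1}" for t
  proof -
    have "y + t *\<^sub>R (z - y) - z = (1 - t) *\<^sub>R (y - z)" by (simp add: algebra_simps)
    moreover have "(1 - t) * norm (y - z) \<le> norm (y - z)"
      using that by (intro mult_left_le_one_le) auto
    ultimately show ?thesis using that by (simp add: norm_minus_commute)
  qed
  have "norm (g z - g y - H z *v (z - y)) \<le> norm (z - y) * (Lt * norm (z - y))"
    using linearization_error_bound[OF gd lip Lt seg norm_ge_zero] .
  then show ?thesis by (simp add: power2_eq_square algebra_simps)
qed

section \<open>Bookkeeping of the cyclic index\<close>

text \<open>Iteration \<open>t\<close> sets \<open>z i (Suc t) = x (Suc t)\<close> for \<open>i = t mod n + 1\<close>, so \<open>z i t = x s\<close> for the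
  largest \<open>s \<le> t\<close> with \<open>i \<le> s\<close> and \<open>s mod n = i mod n\<close>, or \<open>s = 0\<close> before the first visit:
  this is \<open>last_visit n i t\<close>. \<open>epoch n s\<close> is \<open>\<lceil>s / n\<rceil>\<close>.\<close>

definition last_visit :: "nat \<Rightarrow> nat \<Rightarrow> nat \<Rightarrow> nat" where
  "last_visit n i t = (if t < i then 0 else t - (t - i) mod n)"

definition epoch :: "nat \<Rightarrow> nat \<Rightarrow> nat" where
  "epoch n s = (s + n - 1) div n"

lemma last_visit_0: "1 \<le> i \<Longrightarrow> last_visit n i 0 = 0" by (simp add: last_visit_def)

lemma last_visit_le: "last_visit n i t \<le> t" by (simp add: last_visit_def)

lemma less_last_visit_add: assumes "1 \<le> n" "i \<le> n" shows "t < last_visit n i t + n"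
proof (cases "t < i")
  case True then show ?thesis using assms by (simp add: last_visit_def)
next
  case False
  have "(t - i) mod n < n" using assms by simp
  moreover have "(t - i) mod n \<le> t" by (meson diff_le_self mod_le_divisor order_trans mod_less_eq_dividend)
  ultimately show ?thesis using False by (simp add: last_visit_def)
qed

lemma mod_diff_ne_pred:
  fixes n i t :: nat
  assumes n: "1 \<le> n" and i: "1 \<le> i" "i \<le> n" and ti: "i \<le> t" and ne: "i \<noteq> t mod n + 1"
  shows "(t - i) mod n \<noteq> n - 1"
proof
  assume h: "(t - i) mod n = n - 1"
  have "t mod n = ((t - i) + i) mod n" using ti by simp
  also have "\<dots> = ((t - i) mod n + i) mod n" by (simp add: mod_add_left_eq)
  also have "\<dots> = ((i - 1) + n) mod n" using h n i by (simp add: add.commute)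
  also have "\<dots> = i - 1" using i by (simp only: mod_add_self2) simp
  finally show False using ne i by simp
qed

lemma last_visit_Suc:
  assumes n: "1 \<le> n" and i: "1 \<le> i" "i \<le> n"
  shows "last_visit n i (Suc t) = (if i = t mod n + 1 then Suc t else last_visit n i t)"
proof (cases "i = t mod n + 1")
  case True
  have "\<not> Suc t < i" using True mod_less_eq_dividend[of t n] by linarith
  moreover have "(Suc t - i) mod n = 0"
  proof -
    have "Suc t - i = t div n * n" using True div_mult_mod_eq[of t n] by linarith
    then show ?thesis by simp
  qed
  ultimately show ?thesis using True by (simp add: last_visit_def)
next
  case False
  show ?thesis
  proof (cases "Suc t < i")
    case True then show ?thesis using False by (simp add: last_visit_def)
  next
    case ge: False
    have ne: "Suc t \<noteq> i"
    proof
      assume "Suc t = i"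
      then have "t < n" using i by simp
      then have "t mod n = t" by simp
      then show False using False \<open>Suc t = i\<close> by simp
    qed
    then have ti: "i \<le> t" using ge by simp
    have "(t - i) mod n \<noteq> n - 1" by (rule mod_diff_ne_pred[OF n i ti False])
    then have "(Suc t - i) mod n = (t - i) mod n + 1"
    proof -
      have "Suc t - i = Suc (t - i)" using ti by simp
      moreover have "Suc (t - i) mod n = (if Suc ((t - i) mod n) = n then 0 else Suc ((t - i) mod n))"
        by (rule mod_Suc)
      moreover have "Suc ((t - i) mod n) \<noteq> n" using \<open>(t - i) mod n \<noteq> n - 1\<close> by simp
      ultimately show ?thesis by simp
    qed
    moreover have "(t - i) mod n \<le> t - i" by simp
    ultimately show ?thesis using ge ti False by (simp add: last_visit_def)
  qed
qed

lemma epoch_Suc: "1 \<le> n \<Longrightarrow> epoch n (Suc t) = t div n + 1"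
proof -
  assume n: "1 \<le> n"
  have "Suc t + n - 1 = t + 1 * n" using n by simp
  then show ?thesis unfolding epoch_def using n by simp
qed

lemma epoch_mult:
  assumes n: "1 \<le> n" shows "epoch n (q * n) = q"
proof -
  have e: "q * n + n - 1 = (n - 1) + q * n" using n by simp
  have "epoch n (q * n) = ((n - 1) + q * n) div n" by (simp only: epoch_def e)
  also have "\<dots> = q + (n - 1) div n" using n by (intro div_mult_self1) simp
  finally show ?thesis using n by simp
qed

lemma epoch_0: "epoch n 0 = 0" by (cases n) (auto simp: epoch_def)

lemma div_le_epoch: assumes "1 \<le> n" "t < s + n" shows "t div n \<le> epoch n s"
  unfolding epoch_def using assms by (intro div_le_mono) simp

lemma nat_ceiling_divide_eq_epoch: assumes "1 \<le> n" shows "nat \<lceil>real s / real n\<rceil> = epoch n s"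
proof -
  have "\<lceil>real s / real n\<rceil> = int ((s + n - 1) div n)"
  proof (rule ceiling_unique)
    let ?q = "(s + n - 1) div n"
    have "?q * n \<le> s + n - 1" by (rule div_times_less_eq_dividend)
    moreover have "s + n - 1 < ?q * n + n"
      using div_mult_mod_eq[of "s+n-1" n] mod_less_divisor[of n "s+n-1"] assms by linarith
    ultimately have a: "?q * n < s + n" "s \<le> ?q * n" using assms by linarith+
    show "real_of_int (int ?q) - 1 < real s / real n"
    proof -
      have "real (?q * n) < real s + real n" using a(1) by linarith
      then have "real ?q * real n < real s + real n" by simp
      then have "real ?q < real s / real n + 1" using assms by (simp add: field_simps)
      then show ?thesis by simp
    qed
    show "real s / real n \<le> real_of_int (int ?q)"
    proof -
      have "real s \<le> real ?q * real n" using a(2) by (metis of_nat_le_iff of_nat_mult)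
      then show ?thesis using assms by (simp add: field_simps)
    qed
  qed
  then show ?thesis unfolding epoch_def by simp
qed

lemma last_visit_current:
  assumes n: "1 \<le> n"
  shows "epoch n (last_visit n (t mod n + 1) t) = t div n" and "t div n * n \<in> {last_visit n (t mod n + 1) t..t}"
proof -
  let ?i = "t mod n + 1"
  have "last_visit n ?i t = (if t < n then 0 else Suc t - n)"
  proof (cases "t < n")
    case True then show ?thesis by (simp add: last_visit_def)
  next
    case False
    have "0 < t div n" using False n by (simp add: div_greater_zero_iff)
    then obtain p where p: "t div n = Suc p" by (metis gr0_implies_Suc)
    have t: "t = t div n * n + t mod n" by simp
    then have t2: "t = p * n + n + t mod n" using p by simp
    have e: "t - ?i = p * n + (n - 1)" using t2 n by linarith
    have "(p * n + (n - 1)) mod n = (n - 1) mod n" by (rule mod_mult_self3)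
    then have "(t - ?i) mod n = n - 1" using n e by simp
    moreover have "\<not> t < ?i" using False mod_less_divisor[of n t] n by linarith
    ultimately show ?thesis using False n by (simp add: last_visit_def)
  qed
  moreover have "t div n * n \<le> t" by simp
  moreover have "Suc t - n \<le> t div n * n" if "\<not> t < n"
  proof -
    have "t mod n < n" using n by simp
    then show ?thesis using div_mult_mod_eq[of t n] by linarith
  qed
  moreover have "epoch n (Suc t - n) = t div n" if "\<not> t < n"
  proof -
    have "Suc t - n + n - 1 = t" using that n by simp
    then show ?thesis by (simp add: epoch_def)
  qed
  ultimately show "epoch n (last_visit n ?i t) = t div n" "t div n * n \<in> {last_visit n ?i t..t}"
    by (auto simp: epoch_def)
qed

lemma multiple_in_window_unique:
  fixes n s t u1 u2 :: nat
  assumes "1 \<le> n" "t < s + n" "u1 \<in> {s..t}" "u2 \<in> {s..t}" "u1 mod n = 0" "u2 mod n = 0"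
  shows "u1 = u2"
proof (rule ccontr)
  assume ne: "u1 \<noteq> u2"
  have key: False if ha: "a \<in> {s..t}" and hb: "b \<in> {s..t}" and ma: "a mod n = 0"
    and mb: "b mod n = 0" and ab: "a < b" for a b
  proof -
    obtain p where p: "a = n * p" using ma by auto
    obtain q where q: "b = n * q" using mb by auto
    have "p < q" using ab p q by simp
    then have "n * p + n \<le> n * q" by (metis Suc_leI mult_Suc_right mult_le_mono2 add.commute)
    then show False using ha hb p q assms(2) by simp
  qed
  show False using ne key assms by (metis nat_neq_iff)
qed

lemma prod_window_eq_multiple:
  fixes om :: "nat \<Rightarrow> real"
  assumes n: "1 \<le> n" and w: "t < s + n" and one: "\<And>u. u mod n \<noteq> 0 \<Longrightarrow> om u = 1"
    and u0: "u0 \<in> {s..t}" "u0 mod n = 0"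
  shows "prod om {s..t} = om u0"
proof -
  have "prod om {s..t} = prod om {u0}"
  proof (rule prod.mono_neutral_right)
    show "\<forall>u\<in>{s..t} - {u0}. om u = 1"
      using multiple_in_window_unique[OF n w _ u0(1) _ u0(2)] one by blast
  qed (use u0 in auto)
  then show ?thesis by simp
qed

lemma prod_window_bounds:
  fixes om :: "nat \<Rightarrow> real"
  assumes n: "1 \<le> n" and w: "t < s + n" and one: "\<And>u. u mod n \<noteq> 0 \<Longrightarrow> om u = 1"
    and bd: "\<And>u. 1 \<le> om u \<and> om u \<le> W"
  shows "1 \<le> prod om {s..t} \<and> prod om {s..t} \<le> W"
proof (cases "\<exists>u0\<in>{s..t}. u0 mod n = 0")
  case True
  then obtain u0 where u0: "u0 \<in> {s..t}" "u0 mod n = 0" by (rule bexE)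
  have "prod om {s..t} = om u0" by (rule prod_window_eq_multiple[OF n w one u0])
  then show ?thesis using bd[of u0] by simp
next
  case False
  then have "prod om {s..t} = 1" using one by (intro prod.neutral) blast
  then show ?thesis using bd[of 0] by auto
qed

section \<open>The scalar recursion for \<open>\<nu>\<close>\<close>

text \<open>\<open>nu_bound q\<close> is the bound on \<open>\<nu>\<close> after \<open>q\<close> epochs: it solves
  \<open>\<nu>\<^sub>q\<^sub>+\<^sub>1 \<le> \<epsilon> (E\<^sub>q \<nu>\<^sub>q + D (E\<^sub>q - 1))\<close> with \<open>E\<^sub>q = (1 + a \<rho>\<^sup>q)\<^sup>2 (1 + 2 a \<rho>\<^sup>q)\<close>, \<open>C = 4 D a\<close>.\<close>

definition drift_factor :: "real \<Rightarrow> real \<Rightarrow> nat \<Rightarrow> real" where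
  "drift_factor a \<rho> q = exp (4 * a * (\<Sum>j<q. \<rho>^j))"

definition drift_sum :: "real \<Rightarrow> real \<Rightarrow> real \<Rightarrow> real \<Rightarrow> nat \<Rightarrow> real" where
  "drift_sum \<sigma>0 C \<rho> \<epsilon> q = \<sigma>0 + C * (\<Sum>j<q. (\<rho>/\<epsilon>)^j)"

definition nu_bound :: "real \<Rightarrow> real \<Rightarrow> real \<Rightarrow> real \<Rightarrow> real \<Rightarrow> nat \<Rightarrow> real" where
  "nu_bound \<sigma>0 C a \<rho> \<epsilon> q = \<epsilon>^q * drift_factor a \<rho> q * drift_sum \<sigma>0 C \<rho> \<epsilon> q"

lemma nu_bound_0: "nu_bound \<sigma>0 C a \<rho> \<epsilon> 0 = \<sigma>0"
  by (simp add: nu_bound_def drift_factor_def drift_sum_def)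

lemma growth_le_exp:
  fixes x :: real assumes "0 \<le> x" shows "(1 + x)^2 * (1 + 2*x) \<le> exp (4 * x)"
proof -
  have "(1 + x)^2 \<le> (exp x)^2" using assms by (intro power_mono) (auto simp: exp_ge_add_one_self)
  moreover have "1 + 2*x \<le> exp (2*x)" by (rule exp_ge_add_one_self)
  ultimately have "(1 + x)^2 * (1 + 2*x) \<le> (exp x)^2 * exp (2*x)"
    using assms by (intro mult_mono) auto
  also have "\<dots> = exp (4 * x)" by (simp add: power2_eq_square exp_add[symmetric])
  finally show ?thesis .
qed

lemma growth_minus_one_le:
  fixes x :: real assumes "0 \<le> x" shows "(1 + x)^2 * (1 + 2*x) - 1 \<le> 4 * x * ((1 + x)^2 * (1 + 2*x))"
proof -
  have "(1 + x)^2 * (1 + 2*x) - 1 = 4*x + 5*x^2 + 2*x^3" by (simp add: power2_eq_square power3_eq_cube algebra_simps)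
  also have "\<dots> \<le> 4*x + 16*x^2 + 20*x^3 + 8*x^4" using assms by simp
  also have "\<dots> = 4 * x * ((1 + x)^2 * (1 + 2*x))"
    by (simp add: power2_eq_square power3_eq_cube power4_eq_xxxx algebra_simps)
  finally show ?thesis .
qed

lemma nu_bound_Suc_ge:
  fixes \<epsilon> a \<rho> D \<sigma>0 \<nu>0 :: real
  assumes e: "0 < \<epsilon>" and a: "0 \<le> a" and r: "0 \<le> \<rho>" and D: "0 \<le> D" and s0: "0 \<le> \<sigma>0"
    and nu0: "\<nu>0 \<le> nu_bound \<sigma>0 (4 * D * a) a \<rho> \<epsilon> q"
    and x: "x = a * \<rho>^q" and E: "E = (1 + x)^2 * (1 + 2*x)"
  shows "\<epsilon> * (E * \<nu>0 + D * (E - 1)) \<le> nu_bound \<sigma>0 (4 * D * a) a \<rho> \<epsilon> (Suc q)"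
proof -
  let ?C = "4 * D * a"
  let ?W = "drift_factor a \<rho> q" and ?S = "drift_sum \<sigma>0 ?C \<rho> \<epsilon> q"
  have x0: "0 \<le> x" using x a r by simp
  have E0: "0 \<le> E" using E x0 by simp
  have Eexp: "E \<le> exp (4*x)" using E growth_le_exp[OF x0] by simp
  have Em: "E - 1 \<le> 4 * x * E" using E growth_minus_one_le[OF x0] by simp
  have W1: "1 \<le> ?W" unfolding drift_factor_def using a r by (simp add: sum_nonneg)
  have S0: "0 \<le> ?S" unfolding drift_sum_def using s0 D a r e by (intro add_nonneg_nonneg mult_nonneg_nonneg sum_nonneg) auto
  have WS: "drift_factor a \<rho> (Suc q) = ?W * exp (4*x)"
    unfolding drift_factor_def x by (simp add: exp_add[symmetric] algebra_simps)
  have SS: "drift_sum \<sigma>0 ?C \<rho> \<epsilon> (Suc q) = ?S + ?C * (\<rho>/\<epsilon>)^q"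
    unfolding drift_sum_def by (simp add: algebra_simps)
  have eq: "\<epsilon>^q * (?C * (\<rho>/\<epsilon>)^q) = 4 * D * x"
    using e by (simp add: x power_divide field_simps)
  have t1: "\<epsilon> * (E * \<nu>0) \<le> \<epsilon>^(Suc q) * (?W * exp (4*x)) * ?S"
  proof -
    have "E * \<nu>0 \<le> E * (\<epsilon>^q * ?W * ?S)" using nu0 E0 unfolding nu_bound_def by (intro mult_left_mono) auto
    also have "\<dots> \<le> exp (4*x) * (\<epsilon>^q * ?W * ?S)"
      using Eexp e W1 S0 by (intro mult_right_mono) auto
    finally have "\<epsilon> * (E * \<nu>0) \<le> \<epsilon> * (exp (4*x) * (\<epsilon>^q * ?W * ?S))"
      using e by (intro mult_left_mono) auto
    then show ?thesis by (simp add: algebra_simps)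
  qed
  have t2: "\<epsilon> * (D * (E - 1)) \<le> \<epsilon>^(Suc q) * (?W * exp (4*x)) * (?C * (\<rho>/\<epsilon>)^q)"
  proof -
    have "D * (E - 1) \<le> D * (4 * x * E)" using Em D by (intro mult_left_mono) auto
    also have "\<dots> \<le> D * (4 * x * (?W * exp (4*x)))"
    proof -
      have "exp (4*x) \<le> ?W * exp (4*x)" using W1 by (simp add: mult_le_cancel_right1)
      then have "E \<le> ?W * exp (4*x)" using Eexp by linarith
      then show ?thesis using D x0 by (intro mult_left_mono) auto
    qed
    also have "\<dots> = (?W * exp (4*x)) * (\<epsilon>^q * (?C * (\<rho>/\<epsilon>)^q))" by (simp only: eq) (simp add: algebra_simps)
    finally have "\<epsilon> * (D * (E - 1)) \<le> \<epsilon> * ((?W * exp (4*x)) * (\<epsilon>^q * (?C * (\<rho>/\<epsilon>)^q)))"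
      using e by (intro mult_left_mono) auto
    then show ?thesis by (simp add: algebra_simps)
  qed
  have "\<epsilon> * (E * \<nu>0 + D * (E - 1)) = \<epsilon> * (E * \<nu>0) + \<epsilon> * (D * (E - 1))" by (simp add: algebra_simps)
  also have "\<dots> \<le> \<epsilon>^(Suc q) * (?W * exp (4*x)) * ?S + \<epsilon>^(Suc q) * (?W * exp (4*x)) * (?C * (\<rho>/\<epsilon>)^q)"
    using t1 t2 by (rule add_mono)
  also have "\<dots> = nu_bound \<sigma>0 ?C a \<rho> \<epsilon> (Suc q)"
    unfolding nu_bound_def WS SS by (simp add: algebra_simps)
  finally show ?thesis .
qed

lemma sum_power_le_inverse: fixes x :: real assumes "0 \<le> x" "x < 1" shows "(\<Sum>j<q. x^j) \<le> 1 / (1 - x)"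
proof -
  have "(\<Sum>j<q. x^j) = (1 - x^q) / (1 - x)" using assms by (simp add: sum_gp_strict)
  also have "\<dots> \<le> 1 / (1 - x)" using assms by (intro divide_right_mono) auto
  finally show ?thesis .
qed

lemma nu_bound_le:
  assumes e: "0 < \<epsilon>" and a: "0 \<le> a" and r: "0 \<le> \<rho>" "\<rho> < \<epsilon>" "\<epsilon> \<le> 1" and C: "0 \<le> C" and s0: "0 \<le> \<sigma>0"
  shows "nu_bound \<sigma>0 C a \<rho> \<epsilon> q \<le> \<epsilon>^q * ((\<sigma>0 + C / (1 - \<rho>/\<epsilon>)) * exp (4 * a / (1 - \<rho>)))"
proof -
  have r1: "\<rho> < 1" using r by simp
  have W: "drift_factor a \<rho> q \<le> exp (4 * a / (1 - \<rho>))"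
  proof -
    have "4 * a * (\<Sum>j<q. \<rho>^j) \<le> 4 * a * (1 / (1 - \<rho>))"
      using sum_power_le_inverse[OF r(1) r1] a by (intro mult_left_mono) auto
    then show ?thesis unfolding drift_factor_def by simp
  qed
  have S: "drift_sum \<sigma>0 C \<rho> \<epsilon> q \<le> \<sigma>0 + C / (1 - \<rho>/\<epsilon>)"
  proof -
    have "0 \<le> \<rho>/\<epsilon>" "\<rho>/\<epsilon> < 1" using r e by (auto simp: field_simps)
    then have "C * (\<Sum>j<q. (\<rho>/\<epsilon>)^j) \<le> C * (1 / (1 - \<rho>/\<epsilon>))"
      using sum_power_le_inverse C by (intro mult_left_mono) auto
    then show ?thesis unfolding drift_sum_def by simp
  qed
  have S0: "0 \<le> drift_sum \<sigma>0 C \<rho> \<epsilon> q"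
    unfolding drift_sum_def using s0 C r e by (intro add_nonneg_nonneg mult_nonneg_nonneg sum_nonneg) auto
  have "drift_factor a \<rho> q * drift_sum \<sigma>0 C \<rho> \<epsilon> q \<le> exp (4 * a / (1 - \<rho>)) * (\<sigma>0 + C / (1 - \<rho>/\<epsilon>))"
    using W S S0 by (intro mult_mono) (auto simp: drift_factor_def)
  then have "\<epsilon>^q * (drift_factor a \<rho> q * drift_sum \<sigma>0 C \<rho> \<epsilon> q) \<le> \<epsilon>^q * (exp (4 * a / (1 - \<rho>)) * (\<sigma>0 + C / (1 - \<rho>/\<epsilon>)))"
    using e by (intro mult_left_mono) auto
  then show ?thesis unfolding nu_bound_def by (simp add: algebra_simps)
qed

lemma nu_drift_step_le:
  fixes \<Omega> \<nu> T0 T1 D y :: real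
  assumes "0 \<le> \<Omega>" "0 \<le> \<nu>" "0 < D" "T0 \<le> (1 + 2 * y) * T1"
  shows "D * (\<Omega> * (\<nu> * T0 / D + T0) - T1)
    \<le> (\<Omega> * (1 + 2 * y) * \<nu> + D * (\<Omega> * (1 + 2 * y) - 1)) * T1"
proof -
  have "D * (\<Omega> * (\<nu> * T0 / D + T0) - T1) = \<Omega> * \<nu> * T0 + D * \<Omega> * T0 - D * T1"
    using assms(3) by (simp add: field_simps)
  also have "\<dots> \<le> \<Omega> * \<nu> * ((1 + 2 * y) * T1) + D * \<Omega> * ((1 + 2 * y) * T1) - D * T1"
    using assms by (intro diff_right_mono add_mono mult_left_mono) auto
  also have "\<dots> = (\<Omega> * (1 + 2 * y) * \<nu> + D * (\<Omega> * (1 + 2 * y) - 1)) * T1"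
    by (simp add: algebra_simps)
  finally show ?thesis .
qed

section \<open>Analysis of a run of LISR-\<open>k\<close>\<close>

locale finite_sum_problem =
  fixes n :: nat and g :: "nat \<Rightarrow> real^'d \<Rightarrow> real^'d" and H :: "nat \<Rightarrow> real^'d \<Rightarrow> real^'d^'d"
    and \<mu> L Lt :: real and xs :: "real^'d"
  assumes n: "1 \<le> n" and mu: "0 < \<mu>" and muL: "\<mu> \<le> L" and Lt: "0 \<le> Lt"
    and Hsym: "\<And>i y. i \<in> {1..n} \<Longrightarrow> symmetric_matrix (H i y)"
    and Hlow: "\<And>i y v. i \<in> {1..n} \<Longrightarrow> \<mu> * (v \<bullet> v) \<le> v \<bullet> (H i y *v v)"
    and Hup: "\<And>i y v. i \<in> {1..n} \<Longrightarrow> v \<bullet> (H i y *v v) \<le> L * (v \<bullet> v)"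
    and Hlip: "\<And>i y y'. i \<in> {1..n} \<Longrightarrow> mat_norm (H i y - H i y') \<le> Lt * norm (y - y')"
    and taylor: "\<And>i y y'. i \<in> {1..n} \<Longrightarrow>
      norm (g i y - g i y' - H i y *v (y - y')) \<le> Lt * (norm (y - y'))\<^sup>2"
    and gsum: "(\<Sum>i\<in>{1..n}. g i xs) = 0"
begin

lemma current_index_in: "t mod n + 1 \<in> {1..n}"
  using n by (simp add: Suc_leI)

lemma hessian_quadratic_nonneg: "i \<in> {1..n} \<Longrightarrow> 0 \<le> v \<bullet> (H i y *v v)"
  using Hlow[of i v y] mu by (meson inner_ge_zero mult_nonneg_nonneg less_imp_le order_trans)

lemma trace_hessian_bounds:
  assumes i: "i \<in> {1..n}"
  shows "real CARD('d) * \<mu> \<le> trace (H i y)" "trace (H i y) \<le> real CARD('d) * L"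
proof -
  have "\<mu> \<le> axis j 1 \<bullet> (H i y *v axis j 1)" for j using Hlow[OF i, where y=y and v="axis j 1"] by simp
  then have "(\<Sum>j\<in>(UNIV::'d set). \<mu>) \<le> trace (H i y)"
    unfolding trace_eq_sum_quadratic_axis by (intro sum_mono)
  then show "real CARD('d) * \<mu> \<le> trace (H i y)" by simp
  have "axis j 1 \<bullet> (H i y *v axis j 1) \<le> L" for j using Hup[OF i, where y=y and v="axis j 1"] by simp
  then have "trace (H i y) \<le> (\<Sum>j\<in>(UNIV::'d set). L)"
    unfolding trace_eq_sum_quadratic_axis by (intro sum_mono)
  then show "trace (H i y) \<le> real CARD('d) * L" by simp
qed

lemma trace_hessian_pos: "i \<in> {1..n} \<Longrightarrow> 0 < trace (H i y)"
  using trace_hessian_bounds(1)[of i y] mu by (meson mult_pos_pos of_nat_0_less_iff zero_less_card_finite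
      order_less_le_trans)

end

lemma finite_sum_problem_if_smooth:
  fixes f :: "nat \<Rightarrow> real^'d \<Rightarrow> real" and g :: "nat \<Rightarrow> real^'d \<Rightarrow> real^'d"
    and H :: "nat \<Rightarrow> real^'d \<Rightarrow> real^'d^'d"
  assumes n: "n \<ge> 1" and mu: "0 < \<mu>" and muL: "\<mu> \<le> L"
    and grad: "\<And>i x. i \<in> {1..n} \<Longrightarrow> (f i has_derivative (\<lambda>h. g i x \<bullet> h)) (at x)"
    and hess: "\<And>i x. i \<in> {1..n} \<Longrightarrow> (g i has_derivative (\<lambda>h. H i x *v h)) (at x)"
    and bounds: "\<And>i x. i \<in> {1..n} \<Longrightarrow>
        loewner_le (\<mu> *\<^sub>R mat 1) (H i x) \<and> loewner_le (H i x) (L *\<^sub>R mat 1)"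
    and lip: "\<And>i x y. i \<in> {1..n} \<Longrightarrow> mat_norm (H i x - H i y) \<le> Lt * norm (x - y)"
    and xstar: "\<And>x. (1 / real n) * (\<Sum>i\<in>{1..n}. f i xstar) \<le> (1 / real n) * (\<Sum>i\<in>{1..n}. f i x)"
  shows "finite_sum_problem n g H \<mu> L Lt xstar"
proof
  have one_in: "1 \<in> {1..n}" using n by simp
  obtain j :: 'd where True by blast
  have "0 \<le> mat_norm (H 1 0 - H 1 (axis j 1))" by (rule mat_norm_nonneg)
  also have "\<dots> \<le> Lt * norm (0 - axis j (1::real))" by (rule lip[OF one_in])
  finally show Lt: "0 \<le> Lt" by (simp add: zero_le_mult_iff)
  show "symmetric_matrix (H i y)" if "i \<in> {1..n}" for i y
    using hessian_symmetric[OF grad hess lip Lt] that by blast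
  show "norm (g i y - g i y' - H i y *v (y - y')) \<le> Lt * (norm (y - y'))\<^sup>2"
    if "i \<in> {1..n}" for i y y'
    using gradient_taylor_bound[OF hess lip Lt] that by blast
  show "(\<Sum>i\<in>{1..n}. g i xstar) = 0"
  proof (rule sum_gradients_eq_0_at_minimum[where f = f])
    fix y
    show "(\<Sum>i\<in>{1..n}. f i xstar) \<le> (\<Sum>i\<in>{1..n}. f i y)"
      using mult_left_le_imp_le[OF xstar[of y]] n by simp
  qed (use grad in auto)
qed (use n mu muL lip bounds in \<open>auto simp: loewner_le_iff_quadratic matrix_vector_mult_scaleR_left\<close>)

locale lisr_analysis = finite_sum_problem n g H \<mu> L Lt xs
  for n g H \<mu> L Lt xs +
  fixes \<rho> \<epsilon> \<kappa> D a r0 \<sigma>0 :: real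
    and x :: "nat \<Rightarrow> real^'d" and z :: "nat \<Rightarrow> nat \<Rightarrow> real^'d" and B :: "nat \<Rightarrow> nat \<Rightarrow> real^'d^'d"
    and U :: "nat \<Rightarrow> real^'k::finite^'d" and om :: "nat \<Rightarrow> real"
  assumes kap: "\<kappa> = L / \<mu>" and Dd: "D = real CARD('d) * \<kappa>"
    and eps: "\<epsilon> = 1 - real CARD('k) / real CARD('d)"
    and rho: "0 < \<rho>" "\<rho> < \<epsilon>"
    and run: "lisr_run n g H om x z B U"
    and om: "\<And>u. om u = (if u mod n = 0 then (1 + a * \<rho>^(epoch n u))\<^sup>2 else 1)"
    and a0: "0 \<le> a" and a1: "a \<le> 1" and aD: "a * (D + 1) \<le> \<rho> / 8" and Ltr: "Lt * r0 \<le> a * \<mu>"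
    and s0: "0 \<le> \<sigma>0"
    and del: "(\<sigma>0 + 4 * D * a / (1 - \<rho> / \<epsilon>)) * exp (4 * a / (1 - \<rho>)) \<le> \<rho> / 8"
    and e0: "norm (x 0 - xs) \<le> r0"
    and init: "\<And>i. i \<in> {1..n} \<Longrightarrow> pos_def (B i 0) \<and> loewner_le (om 0 *\<^sub>R H i (x 0)) (B i 0) \<and>
                  nu \<kappa> ((1 / om 0) *\<^sub>R B i 0) (H i (x 0)) \<le> \<sigma>0"
begin

definition "nu_epoch_bound q = nu_bound \<sigma>0 (4 * D * a) a \<rho> \<epsilon> q"
definition "normalized_B i s = (1 / om s) *\<^sub>R B i s"
definition "initial_error = norm (x 0 - xs)"
definition "\<delta> = (\<sigma>0 + 4 * D * a / (1 - \<rho> / \<epsilon>)) * exp (4 * a / (1 - \<rho>))"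

lemma kappa_pos: "0 < \<kappa>" using kap mu muL by simp
lemma D_pos: "0 < D" using Dd kappa_pos by simp
lemma eps_pos: "0 < \<epsilon>" using rho by simp
lemma eps_le_1: "\<epsilon> \<le> 1" using eps by simp
lemma rho_less_1: "\<rho> < 1" using rho eps_le_1 by simp
lemma card_mult_L_eq: "real CARD('d) * L = D * \<mu>" using Dd kap mu by simp
lemma initial_error_le: "initial_error \<le> r0" using e0 unfolding initial_error_def .

lemma one_le_om: "1 \<le> om u"
proof -
  have "0 \<le> a * \<rho>^(epoch n u)" using a0 rho by simp
  then have "1 \<le> (1 + a * \<rho>^(epoch n u))\<^sup>2" by (intro one_le_power) simp
  then show ?thesis by (simp add: om)
qed

lemma om_le: "om u \<le> (1 + a)\<^sup>2"
proof -
  have "a * \<rho>^(epoch n u) \<le> a * 1" using a0 rho rho_less_1 by (intro mult_left_mono power_le_one) auto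
  then have "(1 + a * \<rho>^(epoch n u))\<^sup>2 \<le> (1 + a)\<^sup>2" using a0 rho by (intro power_mono) auto
  moreover have "1 \<le> (1 + a)\<^sup>2" using a0 by (intro one_le_power) simp
  ultimately show ?thesis by (simp add: om)
qed

lemma om_pos: "0 < om u" using one_le_om[of u] by simp

lemma om_scaleR_normalized_B: "om s *\<^sub>R normalized_B i s = B i s"
  unfolding normalized_B_def using om_pos[of s] by simp

lemma run_step: "let it = t mod n + 1 in
        x (Suc t) = matrix_inv (\<Sum>i\<in>{1..n}. B i t) *v
                      ((\<Sum>i\<in>{1..n}. B i t *v z i t) - (\<Sum>i\<in>{1..n}. g i (z i t))) \<and>
        (\<forall>i\<in>{1..n}. z i (Suc t) = (if i = it then x (Suc t) else z i t)) \<and>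
        is_Ek (B it t - H it (z it (Suc t))) (U t) \<and>
        (\<forall>i\<in>{1..n}. B i (Suc t) =
            (if i = it then om (Suc t) *\<^sub>R SRk (B i t) (H i (z i (Suc t))) (U t)
             else om (Suc t) *\<^sub>R B i t))"
  using run unfolding lisr_run_def by blast

lemma z_eq_last_visit: "i \<in> {1..n} \<Longrightarrow> z i t = x (last_visit n i t)"
proof (induction t)
  case 0 then show ?case using run last_visit_0 unfolding lisr_run_def by auto
next
  case (Suc t)
  have "z i (Suc t) = (if i = t mod n + 1 then x (Suc t) else z i t)"
    using run_step[of t] Suc.prems by (simp add: Let_def)
  then show ?case using Suc last_visit_Suc[OF n, of i t] by auto
qed

lemma z_current_Suc: "z (t mod n + 1) (Suc t) = x (Suc t)"
  using z_eq_last_visit[OF current_index_in[of t], of "Suc t"] last_visit_Suc[OF n, of "t mod n + 1" t]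
    current_index_in[of t] by simp

lemma B_eq_prod_om:
  "i \<in> {1..n} \<Longrightarrow> B i t = prod om {Suc (last_visit n i t)..t} *\<^sub>R B i (last_visit n i t)"
proof (induction t)
  case 0 then show ?case using last_visit_0 by auto
next
  case (Suc t)
  have lv: "last_visit n i (Suc t) = (if i = t mod n + 1 then Suc t else last_visit n i t)"
    using last_visit_Suc[OF n] Suc.prems by auto
  show ?case
  proof (cases "i = t mod n + 1")
    case False
    have B: "B i (Suc t) = om (Suc t) *\<^sub>R B i t"
      using run_step[of t] Suc.prems False by (simp add: Let_def)
    have "Suc (last_visit n i t) \<le> Suc t" using last_visit_le[of n i t] by simp
    then have "prod om {Suc (last_visit n i t)..Suc t} = prod om {Suc (last_visit n i t)..t} * om (Suc t)"
      by (simp add: prod.cl_ivl_Suc)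
    then show ?thesis using B Suc False lv by simp
  qed (use lv in simp)
qed

text \<open>Between two visits of \<open>i\<close> the matrix \<open>B i\<close> is only rescaled, by at most one factor
  \<open>\<omega> \<le> (1 + a)\<^sup>2\<close> since a window of \<open>n\<close> iterations contains at most one multiple of \<open>n\<close>.\<close>

lemma B_eq_window_scaleR:
  fixes t :: nat
  assumes i: "i \<in> {1..n}"
  defines "\<Omega> \<equiv> prod om {last_visit n i t..t}"
  shows "B i t = \<Omega> *\<^sub>R normalized_B i (last_visit n i t)" "1 \<le> \<Omega>" "\<Omega> \<le> (1 + a)\<^sup>2"
proof -
  let ?s = "last_visit n i t"
  have "prod om {?s..t} = om ?s * prod om {Suc ?s..t}"
    using last_visit_le by (simp add: prod.atLeast_Suc_atMost)
  moreover have "B i t = prod om {Suc ?s..t} *\<^sub>R (om ?s *\<^sub>R normalized_B i ?s)"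
    by (simp only: om_scaleR_normalized_B B_eq_prod_om[OF i, of t])
  ultimately show "B i t = \<Omega> *\<^sub>R normalized_B i ?s" unfolding \<Omega>_def by (simp add: mult.commute)
  have "1 \<le> \<Omega> \<and> \<Omega> \<le> (1 + a)\<^sup>2" unfolding \<Omega>_def
  proof (rule prod_window_bounds[OF n])
    show "t < ?s + n" using less_last_visit_add[OF n] i by simp
    show "\<And>u. u mod n \<noteq> 0 \<Longrightarrow> om u = 1" by (simp add: om)
    show "\<And>u. 1 \<le> om u \<and> om u \<le> (1 + a)\<^sup>2" using one_le_om om_le by auto
  qed
  then show "1 \<le> \<Omega>" "\<Omega> \<le> (1 + a)\<^sup>2" by auto
qed

lemma trace_diff_hessian_eq:
  "i \<in> {1..n} \<Longrightarrow> trace (G - H i y) = nu \<kappa> G (H i y) * trace (H i y) / D"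
  using trace_hessian_pos[of i y] D_pos kappa_pos unfolding nu_def Dd by (simp add: field_simps)

lemma nu_epoch_bound_le: "nu_epoch_bound q \<le> \<epsilon>^q * \<delta>"
  unfolding nu_epoch_bound_def \<delta>_def
  using nu_bound_le[OF eps_pos a0 _ rho(2) eps_le_1 _ s0] rho D_pos a0 by auto

lemma nu_epoch_bound_le_rho: "nu_epoch_bound q \<le> \<rho> / 8"
proof -
  have "0 \<le> 4 * D * a / (1 - \<rho> / \<epsilon>)" using D_pos a0 rho eps_pos by (simp add: field_simps)
  then have "0 \<le> \<delta>" unfolding \<delta>_def using s0 by simp
  then have "\<epsilon>^q * \<delta> \<le> \<delta>"
    using eps_pos eps_le_1 by (simp add: mult_left_le_one_le power_le_one)
  then show ?thesis using nu_epoch_bound_le[of q] del unfolding \<delta>_def by linarith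
qed

definition "lisr_invariant t \<longleftrightarrow>
  (\<forall>s\<le>t. norm (x s - xs) \<le> \<rho>^(epoch n s) * initial_error) \<and>
  (\<forall>i\<in>{1..n}. let s = last_visit n i t in
     symmetric_matrix (normalized_B i s) \<and> loewner_le (H i (x s)) (normalized_B i s) \<and>
     nu \<kappa> (normalized_B i s) (H i (x s)) \<le> nu_epoch_bound (epoch n s))"

lemma normalized_B_last_visit:
  fixes t :: nat
  assumes I: "lisr_invariant t" and i: "i \<in> {1..n}"
  defines "G \<equiv> normalized_B i (last_visit n i t)" and "A \<equiv> H i (x (last_visit n i t))"
  shows "symmetric_matrix G" "loewner_le A G" "nu \<kappa> G A \<le> nu_epoch_bound (epoch n (last_visit n i t))"
    "trace (G - A) \<le> \<rho> * \<mu> / 8"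
proof -
  show sG: "symmetric_matrix G" and AG: "loewner_le A G"
    and nuG: "nu \<kappa> G A \<le> nu_epoch_bound (epoch n (last_visit n i t))"
    using I i unfolding lisr_invariant_def G_def A_def Let_def by auto
  have trA: "0 < trace A" "trace A \<le> D * \<mu>"
    unfolding A_def using trace_hessian_pos[OF i] trace_hessian_bounds[OF i] card_mult_L_eq by auto
  have "nu \<kappa> G A \<le> \<rho> / 8" using nuG nu_epoch_bound_le_rho by (meson order_trans)
  then have "nu \<kappa> G A * (trace A / D) \<le> (\<rho> / 8) * (trace A / D)"
    using trA D_pos by (intro mult_right_mono) auto
  then have "trace (G - A) \<le> (\<rho> / 8) * (trace A / D)"
    unfolding A_def trace_diff_hessian_eq[OF i] by simp
  also have "\<dots> \<le> (\<rho> / 8) * \<mu>" using trA D_pos rho by (intro mult_left_mono) (auto simp: field_simps)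
  finally show "trace (G - A) \<le> \<rho> * \<mu> / 8" by simp
qed

lemma B_minus_hessian_small:
  assumes I: "lisr_invariant t" and i: "i \<in> {1..n}"
  shows "symmetric_matrix (B i t - H i (z i t))" "psd (B i t - H i (z i t))"
    "trace (B i t - H i (z i t)) \<le> \<rho> * \<mu> / 2 + 3 * a * D * \<mu>"
    "\<mu> * (v \<bullet> v) \<le> v \<bullet> (B i t *v v)" "symmetric_matrix (B i t)"
proof -
  define s where "s = last_visit n i t"
  define G where "G = normalized_B i s"
  define A where "A = H i (x s)"
  define \<Omega> where "\<Omega> = prod om {s..t}"
  have B: "B i t = \<Omega> *\<^sub>R G" and \<Omega>: "1 \<le> \<Omega>" "\<Omega> \<le> (1 + a)\<^sup>2" and zA: "H i (z i t) = A"
    using B_eq_window_scaleR[OF i, of t] z_eq_last_visit[OF i, of t]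
    unfolding s_def G_def \<Omega>_def A_def by auto
  have sG: "symmetric_matrix G" and AG: "loewner_le A G" and trGA: "trace (G - A) \<le> \<rho> * \<mu> / 8"
    using normalized_B_last_visit[OF I i] unfolding s_def G_def A_def by auto
  have Ap: "0 \<le> w \<bullet> (A *v w)" for w unfolding A_def by (rule hessian_quadratic_nonneg[OF i])
  show "symmetric_matrix (B i t - H i (z i t))" "psd (B i t - H i (z i t))"
    using psd_scaleR_diff[OF AG _ sG \<Omega>(1) Ap] Hsym[OF i] unfolding B zA A_def by auto
  show "symmetric_matrix (B i t)" using symmetric_matrix_scaleR[OF sG] unfolding B .
  have "a * a \<le> a" using mult_left_le_one_le[OF a0 a0 a1] .
  then have O3: "\<Omega> - 1 \<le> 3 * a" using \<Omega>(2) by (simp add: power2_eq_square algebra_simps)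
  have trA: "0 < trace A" "trace A \<le> D * \<mu>"
    unfolding A_def using trace_hessian_pos[OF i] trace_hessian_bounds[OF i] card_mult_L_eq by auto
  have "trace (\<Omega> *\<^sub>R G - A) = \<Omega> * trace (G - A) + (\<Omega> - 1) * trace A"
    by (simp add: trace_sub trace_scaleR algebra_simps)
  also have "\<dots> \<le> 4 * (\<rho> * \<mu> / 8) + (3 * a) * (D * \<mu>)"
    using O3 a1 trGA trA \<Omega>(1) a0 psd_trace_nonneg[of "G - A"] AG
    by (intro add_mono mult_mono) (auto simp: loewner_le_def)
  finally show "trace (B i t - H i (z i t)) \<le> \<rho> * \<mu> / 2 + 3 * a * D * \<mu>"
    unfolding B zA by (simp add: algebra_simps)
  have "\<mu> * (v \<bullet> v) \<le> v \<bullet> (A *v v)" unfolding A_def by (rule Hlow[OF i])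
  also have "\<dots> \<le> v \<bullet> (G *v v)" using AG loewner_le_iff_quadratic by blast
  also have "\<dots> \<le> \<Omega> * (v \<bullet> (G *v v))" using \<Omega>(1) Ap[of v] \<open>v \<bullet> (A *v v) \<le> v \<bullet> (G *v v)\<close>
    by (simp add: mult_le_cancel_right1)
  finally show "\<mu> * (v \<bullet> v) \<le> v \<bullet> (B i t *v v)" unfolding B by (simp add: matrix_vector_mult_scaleR_left)
qed

lemma last_visit_error_le:
  assumes I: "lisr_invariant t" and i: "i \<in> {1..n}"
  shows "norm (z i t - xs) \<le> \<rho>^(t div n) * initial_error"
proof -
  define s where "s = last_visit n i t"
  have "norm (z i t - xs) \<le> \<rho>^(epoch n s) * initial_error"
    using I last_visit_le[of n i t] unfolding z_eq_last_visit[OF i] lisr_invariant_def s_def by blast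
  also have "\<dots> \<le> \<rho>^(t div n) * initial_error"
  proof (rule mult_right_mono)
    show "\<rho>^(epoch n s) \<le> \<rho>^(t div n)"
      using div_le_epoch[OF n, of t s] less_last_visit_add[OF n, of i t] i rho rho_less_1
      unfolding s_def by (intro power_decreasing) auto
  qed (simp add: initial_error_def)
  finally show ?thesis .
qed

text \<open>Small because \<open>B i t\<close> exceeds the Hessian at \<open>z i t\<close> by a matrix of trace \<open>O(\<rho> \<mu>)\<close>, and the
  gradient differs from its linearization there by \<open>O(Lt e\<^sup>2)\<close>.\<close>

lemma newton_residual_bound:
  assumes I: "lisr_invariant t" and i: "i \<in> {1..n}"
  shows "norm (B i t *v (z i t - xs) - (g i (z i t) - g i xs)) \<le> \<rho> * \<mu> * (\<rho>^(t div n) * initial_error)"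
proof -
  define P where "P = B i t - H i (z i t)"
  define e where "e = norm (z i t - xs)"
  have e: "e \<le> \<rho>^(t div n) * initial_error" unfolding e_def by (rule last_visit_error_le[OF I i])
  have e0: "0 \<le> e" unfolding e_def by simp
  have Lte: "Lt * e \<le> a * \<mu>"
  proof -
    have "\<rho>^(t div n) \<le> 1" using rho rho_less_1 by (simp add: power_le_one)
    then have "\<rho>^(t div n) * initial_error \<le> initial_error"
      using mult_right_mono[of "\<rho>^(t div n)" 1 initial_error] by (simp add: initial_error_def)
    then have "e \<le> r0" using e initial_error_le by linarith
    then show ?thesis using Lt Ltr by (meson mult_left_mono order_trans)
  qed
  have "B i t *v (z i t - xs) - (g i (z i t) - g i xs)
      = P *v (z i t - xs) - (g i (z i t) - g i xs - H i (z i t) *v (z i t - xs))"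
    unfolding P_def by (simp add: matrix_vector_mult_diff_rdistrib algebra_simps)
  also have "norm \<dots> \<le> norm (P *v (z i t - xs)) + norm (g i (z i t) - g i xs - H i (z i t) *v (z i t - xs))"
    by (rule norm_triangle_ineq4)
  also have "\<dots> \<le> trace P * e + Lt * e\<^sup>2"
    using psd_norm_matrix_vector_le_trace B_minus_hessian_small(1,2)[OF I i] taylor[OF i, of "z i t" xs]
    unfolding e_def P_def by (intro add_mono) auto
  also have "\<dots> \<le> (\<rho> * \<mu> / 2 + 3 * a * D * \<mu>) * e + (a * \<mu>) * e"
  proof (rule add_mono)
    show "trace P * e \<le> (\<rho> * \<mu> / 2 + 3 * a * D * \<mu>) * e"
      using B_minus_hessian_small(3)[OF I i] e0 unfolding P_def by (rule mult_right_mono)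
    show "Lt * e\<^sup>2 \<le> (a * \<mu>) * e"
      using mult_right_mono[OF Lte e0] by (simp add: power2_eq_square mult.assoc)
  qed
  also have "\<dots> \<le> \<rho> * \<mu> * e"
  proof -
    have "3 * a * D + a \<le> 3 * (a * (D + 1))" using a0 by (simp add: algebra_simps)
    then have "\<rho> / 2 + 3 * a * D + a \<le> \<rho>" using aD rho by linarith
    then have "(\<rho> / 2 + 3 * a * D + a) * (\<mu> * e) \<le> \<rho> * (\<mu> * e)"
      using mu e0 by (intro mult_right_mono) auto
    then show ?thesis by (simp add: algebra_simps)
  qed
  also have "\<dots> \<le> \<rho> * \<mu> * (\<rho>^(t div n) * initial_error)" using e rho mu by (intro mult_left_mono) auto
  finally show ?thesis .
qed

lemma error_equation:
  assumes inv: "invertible (\<Sum>i\<in>{1..n}. B i t)"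
  shows "(\<Sum>i\<in>{1..n}. B i t) *v (x (Suc t) - xs)
    = (\<Sum>i\<in>{1..n}. B i t *v (z i t - xs) - (g i (z i t) - g i xs))"
proof -
  let ?I = "{1..n}"
  define S1 where "S1 = (\<Sum>i\<in>?I. B i t *v z i t)"
  define S2 where "S2 = (\<Sum>i\<in>?I. B i t *v xs)"
  define S3 where "S3 = (\<Sum>i\<in>?I. g i (z i t))"
  have "(\<Sum>i\<in>?I. B i t *v (z i t - xs) - (g i (z i t) - g i xs))
      = (\<Sum>i\<in>?I. B i t *v z i t - B i t *v xs - g i (z i t) + g i xs)"
    by (rule sum.cong) (simp_all add: matrix_vector_mult_diff_distrib)
  also have "\<dots> = S1 - S2 - S3 + (\<Sum>i\<in>?I. g i xs)" unfolding S1_def S2_def S3_def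
    by (simp add: sum.distrib sum_subtractf)
  finally have ts: "(\<Sum>i\<in>?I. B i t *v (z i t - xs) - (g i (z i t) - g i xs)) = S1 - S2 - S3"
    using gsum by simp
  have "(\<Sum>i\<in>?I. B i t) *v x (Suc t) = S1 - S3"
    using run_step[of t] matrix_inv_right[OF inv] unfolding S1_def S3_def by (simp add: Let_def)
  then show ?thesis
    unfolding ts S2_def by (simp add: matrix_vector_mult_diff_distrib matrix_vector_mult_sum_left)
qed

lemma iterate_contracts:
  assumes I: "lisr_invariant t"
  shows "norm (x (Suc t) - xs) \<le> \<rho>^(t div n + 1) * initial_error"
    and "invertible (\<Sum>i\<in>{1..n}. B i t)" and "\<And>i. i \<in> {1..n} \<Longrightarrow> pos_def (B i t)"
proof -
  let ?I = "{1..n}"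
  define Bs where "Bs = (\<Sum>i\<in>?I. B i t)"
  have nmu: "0 < real n * \<mu>" using n mu by simp
  have co: "real n * \<mu> * (v \<bullet> v) \<le> v \<bullet> (Bs *v v)" for v
  proof -
    have "(\<Sum>i\<in>?I. \<mu> * (v \<bullet> v)) \<le> (\<Sum>i\<in>?I. v \<bullet> (B i t *v v))"
      by (rule sum_mono) (rule B_minus_hessian_small(4)[OF I])
    then show ?thesis unfolding Bs_def by (simp add: matrix_vector_mult_sum_left inner_sum_right)
  qed
  show inv: "invertible (\<Sum>i\<in>?I. B i t)" using invertible_if_coercive[OF co nmu] unfolding Bs_def .
  show "pos_def (B i t)" if i: "i \<in> ?I" for i
    unfolding pos_def_def
  proof (intro conjI allI impI)
    show "symmetric_matrix (B i t)" by (rule B_minus_hessian_small(5)[OF I i])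
    show "0 < v \<bullet> (B i t *v v)" if "v \<noteq> 0" for v
    proof -
      have "0 < \<mu> * (v \<bullet> v)" using that mu by simp
      then show ?thesis using B_minus_hessian_small(4)[OF I i, of v] by linarith
    qed
  qed
  define trm where "trm i = B i t *v (z i t - xs) - (g i (z i t) - g i xs)" for i
  have By: "Bs *v (x (Suc t) - xs) = (\<Sum>i\<in>?I. trm i)"
    unfolding Bs_def trm_def by (rule error_equation[OF inv])
  have "real n * \<mu> * norm (x (Suc t) - xs) \<le> norm (Bs *v (x (Suc t) - xs))"
    by (rule norm_matrix_vector_ge_if_coercive[OF co])
  also have "\<dots> \<le> (\<Sum>i\<in>?I. norm (trm i))" unfolding By by (rule norm_sum)
  also have "\<dots> \<le> (\<Sum>i\<in>?I. \<rho> * \<mu> * (\<rho>^(t div n) * initial_error))"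
    by (rule sum_mono) (unfold trm_def, rule newton_residual_bound[OF I])
  also have "\<dots> = real n * \<mu> * (\<rho>^(t div n + 1) * initial_error)" by (simp add: algebra_simps)
  finally show "norm (x (Suc t) - xs) \<le> \<rho>^(t div n + 1) * initial_error"
    using nmu by (simp add: mult_le_cancel_left_pos)
qed

lemma prod_om_current_window:
  "prod om {last_visit n (t mod n + 1) t..t} = (1 + a * \<rho>^(t div n))\<^sup>2"
proof -
  have "prod om {last_visit n (t mod n + 1) t..t} = om (t div n * n)"
  proof (rule prod_window_eq_multiple[OF n])
    show "t < last_visit n (t mod n + 1) t + n"
      using less_last_visit_add[OF n] current_index_in[of t] by simp
    show "\<And>u. u mod n \<noteq> 0 \<Longrightarrow> om u = 1" by (simp add: om)
  qed (use last_visit_current(2)[OF n] in auto)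
  then show ?thesis by (simp add: om epoch_mult[OF n])
qed

text \<open>Since the last visit of the current index its Hessian has moved by a relative amount
  \<open>2 a \<rho>\<^sup>q\<close>: the two points are within \<open>2 \<rho>\<^sup>q r\<^sub>0\<close> and the Hessian is Lipschitz.\<close>

lemma hessian_drift_since_last_visit:
  assumes I: "lisr_invariant t"
  defines "i \<equiv> t mod n + 1" and "y \<equiv> a * \<rho>^(t div n)"
  defines "A0 \<equiv> H i (x (last_visit n i t))" and "A1 \<equiv> H i (x (Suc t))"
  shows "v \<bullet> (A1 *v v) \<le> (1 + 2 * y) * (v \<bullet> (A0 *v v))" "trace A0 \<le> (1 + 2 * y) * trace A1"
proof -
  define s where "s = last_visit n i t"
  define q where "q = t div n"
  have i: "i \<in> {1..n}" unfolding i_def by (rule current_index_in)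
  have y0: "0 \<le> y" unfolding y_def using a0 rho by simp
  have ie: "0 \<le> initial_error" "initial_error \<le> r0"
    using initial_error_le by (auto simp: initial_error_def)
  have "norm (x (Suc t) - xs) \<le> \<rho>^(q + 1) * initial_error"
    using iterate_contracts(1)[OF I] unfolding q_def .
  also have "\<dots> \<le> \<rho>^q * initial_error"
    using rho rho_less_1 ie by (intro mult_right_mono power_decreasing) auto
  finally have e1: "norm (x (Suc t) - xs) \<le> \<rho>^q * initial_error" .
  have e2: "norm (x s - xs) \<le> \<rho>^q * initial_error"
    using I last_visit_le[of n i t] last_visit_current(1)[OF n]
    unfolding lisr_invariant_def s_def q_def i_def by auto
  have "norm (x (Suc t) - x s) \<le> norm (x (Suc t) - xs) + norm (x s - xs)"
    using norm_triangle_ineq4[of "x (Suc t) - xs" "x s - xs"] by simp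
  also have "\<dots> \<le> 2 * \<rho>^q * r0"
  proof -
    have "\<rho>^q * initial_error \<le> \<rho>^q * r0" using ie(2) rho by (simp add: mult_left_mono)
    then show ?thesis using e1 e2 by linarith
  qed
  finally have "Lt * norm (x (Suc t) - x s) \<le> Lt * (2 * \<rho>^q * r0)" using Lt by (rule mult_left_mono)
  also have "\<dots> = 2 * \<rho>^q * (Lt * r0)" by simp
  also have "\<dots> \<le> 2 * \<rho>^q * (a * \<mu>)" using Ltr rho by (intro mult_left_mono) auto
  finally have LD: "Lt * norm (x (Suc t) - x s) \<le> 2 * y * \<mu>" unfolding y_def q_def by (simp add: algebra_simps)
  have mn: "mat_norm (A1 - A0) \<le> 2 * y * \<mu>" "mat_norm (A0 - A1) \<le> 2 * y * \<mu>"
    using Hlip[OF i, of "x (Suc t)" "x s"] Hlip[OF i, of "x s" "x (Suc t)"] LD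
    unfolding A1_def A0_def s_def by (auto simp: norm_minus_commute)
  have "v \<bullet> ((A1 - A0) *v v) \<le> mat_norm (A1 - A0) * (v \<bullet> v)"
    using abs_inner_matrix_vector_le_mat_norm[of v "A1 - A0" v]
    by (simp add: power2_norm_eq_inner[symmetric] power2_eq_square mult.assoc)
  also have "\<dots> \<le> 2 * y * \<mu> * (v \<bullet> v)" using mn(1) by (rule mult_right_mono) simp
  also have "\<dots> = 2 * y * (\<mu> * (v \<bullet> v))" by simp
  also have "\<dots> \<le> 2 * y * (v \<bullet> (A0 *v v))" using Hlow[OF i] y0 unfolding A0_def by (simp add: mult_left_mono)
  finally show "v \<bullet> (A1 *v v) \<le> (1 + 2 * y) * (v \<bullet> (A0 *v v))"
    by (simp add: matrix_vector_mult_diff_rdistrib inner_diff_right algebra_simps)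
  have "trace A0 - trace A1 \<le> real CARD('d) * mat_norm (A0 - A1)"
    using abs_trace_le_mat_norm[of "A0 - A1"] by (simp add: trace_sub)
  also have "\<dots> \<le> 2 * y * (real CARD('d) * \<mu>)" using mn(2) by (simp add: mult_left_mono)
  also have "\<dots> \<le> 2 * y * trace A1"
    using trace_hessian_bounds(1)[OF i] y0 unfolding A1_def by (intro mult_left_mono) auto
  finally show "trace A0 \<le> (1 + 2 * y) * trace A1" by (simp add: algebra_simps)
qed

lemma B_current_dominates_hessian:
  assumes I: "lisr_invariant t"
  defines "i \<equiv> t mod n + 1"
  shows "loewner_le (H i (x (Suc t))) (B i t)"
  unfolding loewner_le_iff_quadratic
proof
  fix v
  define s where "s = last_visit n i t"
  define y where "y = a * \<rho>^(t div n)"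
  define G where "G = normalized_B i s"
  define A0 where "A0 = H i (x s)"
  have i: "i \<in> {1..n}" unfolding i_def by (rule current_index_in)
  have B: "B i t = (1 + y)\<^sup>2 *\<^sub>R G"
    using B_eq_window_scaleR(1)[OF i] prod_om_current_window unfolding G_def s_def y_def i_def by simp
  have AG: "loewner_le A0 G"
    using normalized_B_last_visit(2)[OF I i] unfolding G_def A0_def s_def by simp
  have "v \<bullet> (H i (x (Suc t)) *v v) \<le> (1 + 2 * y) * (v \<bullet> (A0 *v v))"
    using hessian_drift_since_last_visit(1)[OF I] unfolding A0_def s_def y_def i_def .
  also have "\<dots> \<le> (1 + y)\<^sup>2 * (v \<bullet> (A0 *v v))"
    using hessian_quadratic_nonneg[OF i] unfolding A0_def
    by (intro mult_right_mono) (simp_all add: power2_eq_square algebra_simps)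
  also have "\<dots> \<le> (1 + y)\<^sup>2 * (v \<bullet> (G *v v))"
    using AG unfolding loewner_le_iff_quadratic by (simp add: mult_left_mono)
  finally show "v \<bullet> (H i (x (Suc t)) *v v) \<le> v \<bullet> (B i t *v v)"
    unfolding B by (simp add: matrix_vector_mult_scaleR_left)
qed

lemma normalized_B_current_Suc:
  assumes I: "lisr_invariant t"
  defines "i \<equiv> t mod n + 1" and "A \<equiv> H (t mod n + 1) (x (Suc t))"
  shows "symmetric_matrix (normalized_B i (Suc t))" "loewner_le A (normalized_B i (Suc t))"
    "trace (normalized_B i (Suc t) - A) \<le> \<epsilon> * trace (B i t - A)"
proof -
  have i: "i \<in> {1..n}" unfolding i_def by (rule current_index_in)
  have zA: "H i (z i (Suc t)) = A" using z_current_Suc unfolding A_def i_def by simp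
  have "normalized_B i (Suc t) = SRk (B i t) A (U t)"
    using run_step[of t] zA i om_pos[of "Suc t"] unfolding normalized_B_def i_def by (simp add: Let_def)
  moreover have "is_Ek (B i t - A) (U t)" using run_step[of t] zA unfolding i_def by (simp add: Let_def)
  ultimately show "symmetric_matrix (normalized_B i (Suc t))" "loewner_le A (normalized_B i (Suc t))"
    "trace (normalized_B i (Suc t) - A) \<le> \<epsilon> * trace (B i t - A)"
    using SRk_loewner_trace[OF B_minus_hessian_small(5)[OF I i] Hsym[OF i]]
      B_current_dominates_hessian[OF I] eps unfolding A_def i_def by auto
qed

lemma nu_nonneg:
  assumes "loewner_le (H i y) G" "i \<in> {1..n}" shows "0 \<le> nu \<kappa> G (H i y)"
proof -
  have "0 \<le> trace (G - H i y)" using assms(1) unfolding loewner_le_def by (rule psd_trace_nonneg)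
  then show ?thesis
    unfolding nu_def using trace_hessian_pos[OF assms(2), of y] kappa_pos by simp
qed

lemma nu_contracts:
  assumes I: "lisr_invariant t"
  defines "i \<equiv> t mod n + 1"
  shows "nu \<kappa> (normalized_B i (Suc t)) (H i (x (Suc t))) \<le> nu_epoch_bound (t div n + 1)"
proof -
  define s where "s = last_visit n i t"
  define y where "y = a * \<rho>^(t div n)"
  define G where "G = normalized_B i s"
  define A0 where "A0 = H i (x s)"
  define A1 where "A1 = H i (x (Suc t))"
  define \<nu>0 where "\<nu>0 = nu \<kappa> G A0"
  define E where "E = (1 + y)\<^sup>2 * (1 + 2 * y)"
  have i: "i \<in> {1..n}" unfolding i_def by (rule current_index_in)
  have B: "B i t = (1 + y)\<^sup>2 *\<^sub>R G"
    using B_eq_window_scaleR(1)[OF i] prod_om_current_window unfolding G_def s_def y_def i_def by simp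
  have AG: "loewner_le A0 G" and nuG: "\<nu>0 \<le> nu_epoch_bound (t div n)"
    using normalized_B_last_visit[OF I i] last_visit_current(1)[OF n]
    unfolding G_def A0_def \<nu>0_def s_def i_def by auto
  have T1: "0 < trace A1" unfolding A1_def by (rule trace_hessian_pos[OF i])
  have "D * trace (B i t - A1) = D * ((1 + y)\<^sup>2 * (\<nu>0 * trace A0 / D + trace A0) - trace A1)"
    using trace_diff_hessian_eq[OF i, of G "x s"] unfolding B \<nu>0_def A0_def
    by (simp add: trace_sub trace_scaleR)
  also have "\<dots> \<le> (E * \<nu>0 + D * (E - 1)) * trace A1"
    using nu_drift_step_le[OF _ nu_nonneg[OF AG[unfolded A0_def] i] D_pos
        hessian_drift_since_last_visit(2)[OF I]]
    unfolding E_def \<nu>0_def A0_def A1_def s_def y_def i_def by simp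
  finally have key: "D * trace (B i t - A1) \<le> (E * \<nu>0 + D * (E - 1)) * trace A1" .
  have "nu \<kappa> (normalized_B i (Suc t)) A1 = D * trace (normalized_B i (Suc t) - A1) / trace A1"
    unfolding nu_def Dd by simp
  also have "\<dots> \<le> D * (\<epsilon> * trace (B i t - A1)) / trace A1"
    using normalized_B_current_Suc(3)[OF I] D_pos T1 unfolding A1_def i_def
    by (intro divide_right_mono mult_left_mono) auto
  also have "\<dots> = \<epsilon> * (D * trace (B i t - A1) / trace A1)" by simp
  also have "\<dots> \<le> \<epsilon> * (E * \<nu>0 + D * (E - 1))"
    using key T1 eps_pos by (intro mult_left_mono) (auto simp: pos_divide_le_eq)
  also have "\<dots> \<le> nu_epoch_bound (t div n + 1)"
    using nu_bound_Suc_ge[OF eps_pos a0 less_imp_le[OF rho(1)] less_imp_le[OF D_pos] s0 _ y_def E_def]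
      nuG unfolding nu_epoch_bound_def by simp
  finally show ?thesis unfolding A1_def .
qed

lemma lisr_invariant_0: "lisr_invariant 0"
  unfolding lisr_invariant_def Let_def
proof (intro conjI ballI allI impI)
  fix s :: nat assume "s \<le> 0"
  then show "norm (x s - xs) \<le> \<rho>^(epoch n s) * initial_error" by (simp add: epoch_0 initial_error_def)
next
  fix i assume i: "i \<in> {1..n}"
  then have l0: "last_visit n i 0 = 0" by (simp add: last_visit_0)
  have ini: "pos_def (B i 0)" "loewner_le (om 0 *\<^sub>R H i (x 0)) (B i 0)"
    "nu \<kappa> ((1 / om 0) *\<^sub>R B i 0) (H i (x 0)) \<le> \<sigma>0" using init[OF i] by auto
  show "symmetric_matrix (normalized_B i (last_visit n i 0))" unfolding l0 normalized_B_def
    using ini(1) symmetric_matrix_scaleR unfolding pos_def_def by blast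
  show "loewner_le (H i (x (last_visit n i 0))) (normalized_B i (last_visit n i 0))"
    unfolding l0 normalized_B_def loewner_le_iff_quadratic
  proof
    fix v
    have "om 0 * (v \<bullet> (H i (x 0) *v v)) \<le> v \<bullet> (B i 0 *v v)"
      using ini(2) unfolding loewner_le_iff_quadratic by (simp add: matrix_vector_mult_scaleR_left)
    then show "v \<bullet> (H i (x 0) *v v) \<le> v \<bullet> ((1 / om 0) *\<^sub>R B i 0 *v v)"
      using om_pos[of 0] by (simp add: matrix_vector_mult_scaleR_left field_simps)
  qed
  show "nu \<kappa> (normalized_B i (last_visit n i 0)) (H i (x (last_visit n i 0)))
      \<le> nu_epoch_bound (epoch n (last_visit n i 0))"
    unfolding l0 normalized_B_def nu_epoch_bound_def epoch_0 nu_bound_0 using ini(3) .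
qed

lemma lisr_invariant_Suc:
  assumes I: "lisr_invariant t" shows "lisr_invariant (Suc t)"
  unfolding lisr_invariant_def Let_def
proof (intro conjI ballI allI impI)
  fix s assume "s \<le> Suc t"
  then show "norm (x s - xs) \<le> \<rho>^(epoch n s) * initial_error"
    using I iterate_contracts(1)[OF I] epoch_Suc[OF n, of t] unfolding lisr_invariant_def
    by (cases "s = Suc t") auto
next
  fix i assume i: "i \<in> {1..n}"
  have lv: "last_visit n i (Suc t) = (if i = t mod n + 1 then Suc t else last_visit n i t)"
    using last_visit_Suc[OF n] i by auto
  have "symmetric_matrix (normalized_B i (last_visit n i (Suc t))) \<and>
      loewner_le (H i (x (last_visit n i (Suc t)))) (normalized_B i (last_visit n i (Suc t))) \<and>
      nu \<kappa> (normalized_B i (last_visit n i (Suc t))) (H i (x (last_visit n i (Suc t))))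
        \<le> nu_epoch_bound (epoch n (last_visit n i (Suc t)))"
  proof (cases "i = t mod n + 1")
    case True
    then show ?thesis
      using normalized_B_current_Suc(1,2)[OF I] nu_contracts[OF I] lv epoch_Suc[OF n, of t] by simp
  next
    case False then show ?thesis using I i lv unfolding lisr_invariant_def Let_def by simp
  qed
  then show "symmetric_matrix (normalized_B i (last_visit n i (Suc t)))"
    "loewner_le (H i (x (last_visit n i (Suc t)))) (normalized_B i (last_visit n i (Suc t)))"
    "nu \<kappa> (normalized_B i (last_visit n i (Suc t))) (H i (x (last_visit n i (Suc t))))
      \<le> nu_epoch_bound (epoch n (last_visit n i (Suc t)))" by auto
qed

lemma lisr_invariant: "lisr_invariant t"
  by (induction t) (auto intro: lisr_invariant_0 lisr_invariant_Suc)

lemma lisr_conclusion: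
  shows "(\<forall>t. invertible (\<Sum>i\<in>{1..n}. B i t) \<and> (\<forall>i\<in>{1..n}. pos_def (B i t))) \<and>
     (\<forall>t. let it = t mod n + 1; c = nat \<lceil>real (Suc t) / real n\<rceil> in
        loewner_le (H it (z it (Suc t))) ((1 / om (Suc t)) *\<^sub>R B it (Suc t)) \<and>
        norm (x (Suc t) - xs) \<le> \<rho> ^ c * norm (x 0 - xs) \<and>
        nu \<kappa> ((1 / om (Suc t)) *\<^sub>R B it (Suc t)) (H it (z it (Suc t))) \<le> \<epsilon> ^ c * \<delta>)"
proof (rule conjI; intro allI)
  fix t
  show "invertible (\<Sum>i\<in>{1..n}. B i t) \<and> (\<forall>i\<in>{1..n}. pos_def (B i t))"
    using iterate_contracts(2,3)[OF lisr_invariant] by blast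
  have c: "nat \<lceil>real (Suc t) / real n\<rceil> = t div n + 1"
    using nat_ceiling_divide_eq_epoch[OF n, of "Suc t"] epoch_Suc[OF n, of t] by (simp only:)
  show "let it = t mod n + 1; c = nat \<lceil>real (Suc t) / real n\<rceil> in
        loewner_le (H it (z it (Suc t))) ((1 / om (Suc t)) *\<^sub>R B it (Suc t)) \<and>
        norm (x (Suc t) - xs) \<le> \<rho> ^ c * norm (x 0 - xs) \<and>
        nu \<kappa> ((1 / om (Suc t)) *\<^sub>R B it (Suc t)) (H it (z it (Suc t))) \<le> \<epsilon> ^ c * \<delta>"
    unfolding Let_def c z_current_Suc
    using normalized_B_current_Suc(2)[OF lisr_invariant, of t] nu_contracts[OF lisr_invariant, of t]
      iterate_contracts(1)[OF lisr_invariant, of t]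
      nu_epoch_bound_le[of "t div n + 1"]
    unfolding normalized_B_def initial_error_def by auto
qed

end

section \<open>Choice of the constants\<close>

lemma powr_three_halves: "0 < (m::real) \<Longrightarrow> m powr (3/2) = m * sqrt m"
  using powr_add[of m 1 "1/2"] by (simp add: powr_half_sqrt)

lemma lipschitz_le_scaled:
  assumes "0 < \<mu>" "\<mu> \<le> L" "0 \<le> Lt"
  shows "Lt \<le> Lt * \<mu> powr (-3/2) * sqrt L * \<mu>"
proof -
  have "\<mu> powr (-3/2) = 1 / (\<mu> * sqrt \<mu>)"
    using powr_minus[of \<mu> "3/2"] powr_three_halves[OF assms(1)] by (simp add: inverse_eq_divide)
  then have "Lt * \<mu> powr (-3/2) * sqrt L * \<mu> = Lt * (sqrt L / sqrt \<mu>)" using assms(1) by simp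
  moreover have "Lt * 1 \<le> Lt * (sqrt L / sqrt \<mu>)"
    using assms by (intro mult_left_mono) auto
  ultimately show ?thesis by simp
qed

text \<open>Here \<open>c\<close> stands for \<open>M \<surd>L\<close>, so that \<open>c r\<^sub>0\<close> is the size of the correction factors \<open>\<omega>\<close>.\<close>

lemma small_radius_exists:
  fixes D \<rho> \<epsilon> c :: real
  assumes D: "0 < D" and rho: "0 < \<rho>" "\<rho> < \<epsilon>" "\<epsilon> \<le> 1" and c: "0 \<le> c"
  shows "\<exists>r0>0. c * r0 \<le> 1 \<and> c * r0 * (D + 1) \<le> \<rho> / 8 \<and>
    (\<rho> / 32 + 4 * D * (c * r0) / (1 - \<rho> / \<epsilon>)) * exp (4 * (c * r0) / (1 - \<rho>)) \<le> \<rho> / 8"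
proof -
  have rho1: "\<rho> < 1" using rho by simp
  have re: "0 < 1 - \<rho> / \<epsilon>" using rho by (simp add: field_simps)
  define amax where "amax = min (min 1 (\<rho> / (8 * (D + 1))))
    (min ((1 - \<rho>) * ln 2 / 4) (\<rho> * (1 - \<rho> / \<epsilon>) / (128 * (D + 1))))"
  have amaxp: "0 < amax" unfolding amax_def using rho rho1 D re by simp
  define r0 where "r0 = amax / (c + 1)"
  define a where "a = c * r0"
  have a0: "0 \<le> a" unfolding a_def r0_def using c amaxp by simp
  have "a = amax * (c / (c + 1))" unfolding a_def r0_def by simp
  also have "\<dots> \<le> amax * 1" using amaxp c by (intro mult_left_mono) auto
  finally have aam: "a \<le> amax" by simp
  have "4 * D * a \<le> 4 * D * (\<rho> * (1 - \<rho> / \<epsilon>) / (128 * (D + 1)))"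
    using aam D unfolding amax_def by (intro mult_left_mono) auto
  also have "\<dots> = (\<rho> * (1 - \<rho> / \<epsilon>) / 32) * (D / (D + 1))" using D by (simp add: field_simps)
  also have "\<dots> \<le> (\<rho> * (1 - \<rho> / \<epsilon>) / 32) * 1" using D rho re by (intro mult_left_mono) auto
  finally have "4 * D * a / (1 - \<rho> / \<epsilon>) \<le> \<rho> / 32" using re by (simp add: field_simps)
  then have "\<rho> / 32 + 4 * D * a / (1 - \<rho> / \<epsilon>) \<le> \<rho> / 16" by simp
  moreover have "exp (4 * a / (1 - \<rho>)) \<le> 2"
  proof -
    have "4 * a / (1 - \<rho>) \<le> ln 2" using aam rho1 unfolding amax_def by (simp add: field_simps)
    then show ?thesis by (metis exp_le_cancel_iff exp_ln zero_less_numeral)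
  qed
  moreover have "0 \<le> \<rho> / 32 + 4 * D * a / (1 - \<rho> / \<epsilon>)" using rho D a0 re by simp
  ultimately have "(\<rho> / 32 + 4 * D * a / (1 - \<rho> / \<epsilon>)) * exp (4 * a / (1 - \<rho>)) \<le> (\<rho> / 16) * 2"
    by (intro mult_mono) auto
  moreover have "a \<le> 1" "a * (D + 1) \<le> \<rho> / 8"
    using aam D unfolding amax_def by (auto simp: field_simps)
  moreover have "0 < r0" unfolding r0_def using amaxp c by simp
  ultimately show ?thesis unfolding a_def by auto
qed

theorem lemma2:
  fixes n :: nat
    and f :: "nat \<Rightarrow> real^'d \<Rightarrow> real"
    and g :: "nat \<Rightarrow> real^'d \<Rightarrow> real^'d"
    and H :: "nat \<Rightarrow> real^'d \<Rightarrow> real^'d^'d"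
    and \<mu> L Lt \<rho> :: real
    and xstar :: "real^'d"
  assumes n: "n \<ge> 1"
    and kd: "CARD('k) < CARD('d)"
    and mu: "0 < \<mu>" and muL: "\<mu> \<le> L"
    and grad: "\<And>i x. i \<in> {1..n} \<Longrightarrow> (f i has_derivative (\<lambda>h. g i x \<bullet> h)) (at x)"
    and hess: "\<And>i x. i \<in> {1..n} \<Longrightarrow> (g i has_derivative (\<lambda>h. H i x *v h)) (at x)"
    and bounds: "\<And>i x. i \<in> {1..n} \<Longrightarrow>
        loewner_le (\<mu> *\<^sub>R mat 1) (H i x) \<and> loewner_le (H i x) (L *\<^sub>R mat 1)"
    and lip: "\<And>i x y. i \<in> {1..n} \<Longrightarrow> mat_norm (H i x - H i y) \<le> Lt * norm (x - y)"
    and xstar: "\<And>x. (1 / real n) * (\<Sum>i\<in>{1..n}. f i xstar) \<le> (1 / real n) * (\<Sum>i\<in>{1..n}. f i x)"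
    and rho: "0 < \<rho>" "\<rho> < 1 - real CARD('k) / real CARD('d)"
  shows "\<exists>r0 > 0. \<exists>\<sigma>0 > 0. \<forall>(x :: nat \<Rightarrow> real^'d) z B (U :: nat \<Rightarrow> real^'k^'d).
     (let \<kappa> = L / \<mu>; M = Lt * \<mu> powr (-3/2); d = real CARD('d); k = real CARD('k);
          om = lisr_omega M L r0 \<rho> n;
          \<delta> = (\<sigma>0 + 4 * M * d * L powr (3/2) * (1/\<mu>) * r0 / (1 - \<rho> / (1 - k / d)))
               * exp (4 * M * sqrt L * r0 / (1 - \<rho>))
      in (lisr_run n g H om x z B U \<and> norm (x 0 - xstar) \<le> r0 \<and>
          (\<forall>i\<in>{1..n}. pos_def (B i 0) \<and> loewner_le (om 0 *\<^sub>R H i (x 0)) (B i 0) \<and>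
                       nu \<kappa> ((1 / om 0) *\<^sub>R B i 0) (H i (x 0)) \<le> \<sigma>0))
      \<longrightarrow>
         (\<forall>t. invertible (\<Sum>i\<in>{1..n}. B i t) \<and> (\<forall>i\<in>{1..n}. pos_def (B i t))) \<and>
         (\<forall>t. let it = t mod n + 1; c = nat \<lceil>real (Suc t) / real n\<rceil> in
            loewner_le (H it (z it (Suc t))) ((1 / om (Suc t)) *\<^sub>R B it (Suc t)) \<and>
            norm (x (Suc t) - xstar) \<le> \<rho> ^ c * norm (x 0 - xstar) \<and>
            nu \<kappa> ((1 / om (Suc t)) *\<^sub>R B it (Suc t)) (H it (z it (Suc t))) \<le> (1 - k / d) ^ c * \<delta>))"
proof -
  define d k where "d = real CARD('d)" and "k = real CARD('k)"
  define \<epsilon> \<kappa> M where "\<epsilon> = 1 - k / d" and "\<kappa> = L / \<mu>" and "M = Lt * \<mu> powr (-3/2)"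
  define D c where "D = d * \<kappa>" and "c = M * sqrt L"
  interpret finite_sum_problem n g H \<mu> L Lt xstar
    by (rule finite_sum_problem_if_smooth[OF n mu muL grad hess bounds lip xstar])
  have D: "0 < D" unfolding D_def d_def \<kappa>_def using mu muL by simp
  have eps: "\<rho> < \<epsilon>" "\<epsilon> \<le> 1" unfolding \<epsilon>_def k_def d_def using rho by auto
  have c: "0 \<le> c" unfolding c_def M_def using Lt mu muL by simp
  obtain r0 where r0: "0 < r0" "c * r0 \<le> 1" "c * r0 * (D + 1) \<le> \<rho> / 8"
    "(\<rho> / 32 + 4 * D * (c * r0) / (1 - \<rho> / \<epsilon>)) * exp (4 * (c * r0) / (1 - \<rho>)) \<le> \<rho> / 8"
    using small_radius_exists[OF D rho(1) eps c] by blast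
  have Ltr: "Lt * r0 \<le> c * r0 * \<mu>"
    using mult_right_mono[OF lipschitz_le_scaled[OF mu muL Lt] less_imp_le[OF r0(1)]]
    unfolding c_def M_def by (simp add: algebra_simps)
  have om: "lisr_omega M L r0 \<rho> n u = (if u mod n = 0 then (1 + c * r0 * \<rho>^(epoch n u))\<^sup>2 else 1)" for u
    unfolding lisr_omega_def c_def nat_ceiling_divide_eq_epoch[OF n] by (simp add: mult.assoc)
  have \<delta>: "(\<rho> / 32 + 4 * M * d * L powr (3/2) * (1/\<mu>) * r0 / (1 - \<rho> / \<epsilon>)) * exp (4 * M * sqrt L * r0 / (1 - \<rho>))
      = (\<rho> / 32 + 4 * D * (c * r0) / (1 - \<rho> / \<epsilon>)) * exp (4 * (c * r0) / (1 - \<rho>))"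
    unfolding D_def \<kappa>_def c_def powr_three_halves[OF order_less_le_trans[OF mu muL]]
    by (simp add: field_simps)
  show ?thesis
    unfolding Let_def
    apply (rule exI[of _ r0], rule conjI[OF r0(1)], rule exI[of _ "\<rho> / 32"])
    apply (rule conjI, simp add: rho(1), intro allI impI)
    subgoal premises run for x z B U
    proof -
      interpret lisr_analysis n g H \<mu> L Lt xstar \<rho> \<epsilon> \<kappa> D "c * r0" r0 "\<rho> / 32" x z B U
        "lisr_omega M L r0 \<rho> n"
        by unfold_locales (use run r0 c Ltr om rho in \<open>auto simp: \<kappa>_def D_def d_def \<epsilon>_def k_def M_def\<close>)
      show ?thesis using lisr_conclusion unfolding Let_def \<delta>_def \<delta>[symmetric]
        by (simp add: M_def \<kappa>_def \<epsilon>_def k_def d_def)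
    qed
    done
qed

end
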